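(* With the notation and hypotheses of the preceding setting (a P-closed set $\Omega$ with P-basis $\mathcal{A}$, pairwise non-conjugate $a^{(1)},\dots,a^{(\ell)}$ with $\mathcal{A}=\bigcup_i(\mathcal{A}\cap C(a^{(i)}))$, each $\mathcal{A}_i=\mathcal{A}\cap C(a^{(i)})=\{a^{(i)}_1,\dots,a^{(i)}_{n_i}\}$ non-empty, $a^{(i)}_j=\mathcal{D}_{a^{(i)}}(\alpha^{(i)}_j)(\alpha^{(i)}_j)^{-1}$, $n=n_1+\dots+n_\ell$, and $\phi_\mathcal{A}:\mathbb{F}^\mathcal{A}\to\mathbb{F}^n$ given by $\phi_\mathcal{A}(E_\mathcal{A}(F))=\big(F^{\mathcal{D}_{a^{(i)}}}(\alpha^{(i)}_j)\big)_{i,j}$ for $F\in\mathbb{F}[x;\sigma,\delta]_n$), let $K_i=K_{a^{(i)}}$. Then the function $\mathrm{wt}:\mathbb{F}^n\to\mathbb{N}$, $\mathrm{wt}(\phi_\mathcal{A}(f))=\mathrm{wt}_\mathcal{A}(f)$ for $f\in\mathbb{F}^\mathcal{A}$, equals the sum-rank weight on $\mathbb{F}^n$ with lengths $(n_1,\dots,n_\ell)$ and division subrings $(K_1,\dots,K_\ell)$.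
   Context: $\mathbb{F}$ is a division ring, $\sigma$ a ring endomorphism, $\delta$ a $\sigma$-derivation; $\mathbb{F}[x;\sigma,\delta]$ the skew polynomial ring ($xa=\sigma(a)x+\delta(a)$); evaluation $F(a)$ defined by $F-F(a)\in\mathbb{F}[x;\sigma,\delta](x-a)$, $E_\mathcal{A}(F)=(a\mapsto F(a))$. P-closure, P-closed, P-independent, P-basis and $\mathrm{Rk}$ as usual ($\overline\Omega$ = common zeros of all skew polynomials vanishing on $\Omega$; P-basis = P-independent subset with P-closure $\Omega$; $\mathrm{Rk}$ = size of a P-basis); $E_\mathcal{A}$ is a bijection from polynomials of degree $<n$ onto $\mathbb{F}^\mathcal{A}$, and $\phi_\mathcal{A}$ is a left linear isomorphism. Skew weight: $\mathrm{wt}_\mathcal{A}(E_\mathcal{A}(F))=n-\mathrm{Rk}(Z(F)\cap\Omega)$. $\mathcal{D}_a(b)=\sigma(b)a+\delta(b)$, $F^{\mathcal{D}_a}(b)=\sum_iF_i\mathcal{D}_a^i(b)$ for $F=\sum F_ix^i$, $K_a=\{b:\mathcal{D}_a(b)=ab\}$, $C(a)=\{\mathcal{D}_a(b)b^{-1}:b\neq0\}$. Sum-rank weight: for division subrings $K_1,\dots,K_\ell$ and $\mathbf{c}=(\mathbf{c}^{(1)},\dots,\mathbf{c}^{(\ell)})$ with $\mathbf{c}^{(i)}\in\mathbb{F}^{n_i}$, $\mathrm{wt_{SR}}(\mathbf{c})=\sum_i\dim_{K_i}\langle c^{(i)}_1,\dots,c^{(i)}_{n_i}\rangle^R_{K_i}$,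 where $\langle\cdot\rangle^R_{K}$ is the right $K$-span. *)

theory Defs
  imports Main
begin

text \<open>Skew polynomials over a division ring, represented by their coefficient
  function nat => 'a with finite support; F k is the coefficient of x^k.\<close>

definition spoly :: "(nat \<Rightarrow> 'a::zero) \<Rightarrow> bool" where
  "spoly F \<longleftrightarrow> finite {k. F k \<noteq> 0}"

definition ring_endo :: "('a::ring_1 \<Rightarrow> 'a) \<Rightarrow> bool" where
  "ring_endo \<sigma> \<longleftrightarrow> (\<forall>x y. \<sigma> (x + y) = \<sigma> x + \<sigma> y) \<and> (\<forall>x y. \<sigma> (x * y) = \<sigma> x * \<sigma> y) \<and> \<sigma> 1 = 1"

definition sigma_derivation :: "('a::ring_1 \<Rightarrow> 'a) \<Rightarrow> ('a \<Rightarrow> 'a) \<Rightarrow> bool" where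
  "sigma_derivation \<sigma> \<delta> \<longleftrightarrow> (\<forall>x y. \<delta> (x + y) = \<delta> x + \<delta> y) \<and>
     (\<forall>x y. \<delta> (x * y) = \<sigma> x * \<delta> y + \<delta> x * y)"

text \<open>Left multiplication by x, using  x b = sigma(b) x + delta(b).\<close>
definition xmul :: "('a::ring_1 \<Rightarrow> 'a) \<Rightarrow> ('a \<Rightarrow> 'a) \<Rightarrow> (nat \<Rightarrow> 'a) \<Rightarrow> (nat \<Rightarrow> 'a)" where
  "xmul \<sigma> \<delta> G = (\<lambda>j. (if j = 0 then 0 else \<sigma> (G (j - 1))) + \<delta> (G j))"

text \<open>Product in F[x;sigma,delta]:  (sum_i F_i x^i) G = sum_i F_i (x^i G).\<close>
definition skew_mult :: "('a::ring_1 \<Rightarrow> 'a) \<Rightarrow> ('a \<Rightarrow> 'a) \<Rightarrow> (nat \<Rightarrow> 'a) \<Rightarrow> (nat \<Rightarrow> 'a) \<Rightarrow> (nat \<Rightarrow> 'a)" where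
  "skew_mult \<sigma> \<delta> F G = (\<lambda>k. \<Sum>i\<in>{i. F i \<noteq> 0}. F i * ((xmul \<sigma> \<delta> ^^ i) G) k)"

definition x_minus :: "'a::ring_1 \<Rightarrow> (nat \<Rightarrow> 'a)" where
  "x_minus a = (\<lambda>k. if k = 0 then - a else if k = 1 then 1 else 0)"

definition skew_eval :: "('a::ring_1 \<Rightarrow> 'a) \<Rightarrow> ('a \<Rightarrow> 'a) \<Rightarrow> (nat \<Rightarrow> 'a) \<Rightarrow> 'a \<Rightarrow> 'a" where
  "skew_eval \<sigma> \<delta> F a = (THE c. \<exists>G. spoly G \<and>
      (\<lambda>k. F k - (if k = 0 then c else 0)) = skew_mult \<sigma> \<delta> G (x_minus a))"

definition skew_zeros :: "('a::ring_1 \<Rightarrow> 'a) \<Rightarrow> ('a \<Rightarrow> 'a) \<Rightarrow> (nat \<Rightarrow> 'a) \<Rightarrow> 'a set" where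
  "skew_zeros \<sigma> \<delta> F = {a. skew_eval \<sigma> \<delta> F a = 0}"

definition P_closure :: "('a::ring_1 \<Rightarrow> 'a) \<Rightarrow> ('a \<Rightarrow> 'a) \<Rightarrow> 'a set \<Rightarrow> 'a set" where
  "P_closure \<sigma> \<delta> \<Omega> = {a. \<forall>F. spoly F \<and> (\<forall>b\<in>\<Omega>. skew_eval \<sigma> \<delta> F b = 0) \<longrightarrow> skew_eval \<sigma> \<delta> F a = 0}"

definition P_closed :: "('a::ring_1 \<Rightarrow> 'a) \<Rightarrow> ('a \<Rightarrow> 'a) \<Rightarrow> 'a set \<Rightarrow> bool" where
  "P_closed \<sigma> \<delta> \<Omega> \<longleftrightarrow> P_closure \<sigma> \<delta> \<Omega> = \<Omega>"

definition P_independent :: "('a::ring_1 \<Rightarrow> 'a) \<Rightarrow> ('a \<Rightarrow> 'a) \<Rightarrow> 'a set \<Rightarrow> bool" where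
  "P_independent \<sigma> \<delta> B \<longleftrightarrow> (\<forall>b\<in>B. b \<notin> P_closure \<sigma> \<delta> (B - {b}))"

definition P_basis :: "('a::ring_1 \<Rightarrow> 'a) \<Rightarrow> ('a \<Rightarrow> 'a) \<Rightarrow> 'a set \<Rightarrow> 'a set \<Rightarrow> bool" where
  "P_basis \<sigma> \<delta> B \<Omega> \<longleftrightarrow> B \<subseteq> \<Omega> \<and> P_independent \<sigma> \<delta> B \<and> P_closure \<sigma> \<delta> B = \<Omega>"

definition Rk :: "('a::ring_1 \<Rightarrow> 'a) \<Rightarrow> ('a \<Rightarrow> 'a) \<Rightarrow> 'a set \<Rightarrow> nat" where
  "Rk \<sigma> \<delta> \<Omega> = card (SOME B. P_basis \<sigma> \<delta> B \<Omega>)"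

definition skew_wt :: "('a::ring_1 \<Rightarrow> 'a) \<Rightarrow> ('a \<Rightarrow> 'a) \<Rightarrow> 'a set \<Rightarrow> nat \<Rightarrow> (nat \<Rightarrow> 'a) \<Rightarrow> nat" where
  "skew_wt \<sigma> \<delta> \<Omega> n F = n - Rk \<sigma> \<delta> (skew_zeros \<sigma> \<delta> F \<inter> \<Omega>)"

definition Dop :: "('a::ring_1 \<Rightarrow> 'a) \<Rightarrow> ('a \<Rightarrow> 'a) \<Rightarrow> 'a \<Rightarrow> 'a \<Rightarrow> 'a" where
  "Dop \<sigma> \<delta> a b = \<sigma> b * a + \<delta> b"

definition D_eval :: "('a::ring_1 \<Rightarrow> 'a) \<Rightarrow> ('a \<Rightarrow> 'a) \<Rightarrow> (nat \<Rightarrow> 'a) \<Rightarrow> 'a \<Rightarrow> 'a \<Rightarrow> 'a" where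
  "D_eval \<sigma> \<delta> F a b = (\<Sum>i\<in>{i. F i \<noteq> 0}. F i * (Dop \<sigma> \<delta> a ^^ i) b)"

definition Kcent :: "('a::ring_1 \<Rightarrow> 'a) \<Rightarrow> ('a \<Rightarrow> 'a) \<Rightarrow> 'a \<Rightarrow> 'a set" where
  "Kcent \<sigma> \<delta> a = {b. Dop \<sigma> \<delta> a b = a * b}"

definition conj_class :: "('a::division_ring \<Rightarrow> 'a) \<Rightarrow> ('a \<Rightarrow> 'a) \<Rightarrow> 'a \<Rightarrow> 'a set" where
  "conj_class \<sigma> \<delta> a = {Dop \<sigma> \<delta> a b * inverse b | b. b \<noteq> 0}"

definition right_span :: "'a::ring_1 set \<Rightarrow> 'a set \<Rightarrow> 'a set" where
  "right_span K S = {x. \<exists>T coef. finite T \<and> T \<subseteq> S \<and> (\<forall>t\<in>T. coef t \<in> K) \<and> x = (\<Sum>t\<in>T. t * coef t)}"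

definition right_indep :: "'a::ring_1 set \<Rightarrow> 'a set \<Rightarrow> bool" where
  "right_indep K B \<longleftrightarrow> (\<forall>T coef. finite T \<and> T \<subseteq> B \<and> (\<forall>t\<in>T. coef t \<in> K) \<and> (\<Sum>t\<in>T. t * coef t) = 0
      \<longrightarrow> (\<forall>t\<in>T. coef t = 0))"

definition right_dim :: "'a::ring_1 set \<Rightarrow> 'a set \<Rightarrow> nat" where
  "right_dim K V = card (SOME B. B \<subseteq> V \<and> right_indep K B \<and> right_span K B = V)"

text \<open>Sum-rank weight of c = (c^(1),...,c^(l)), c^(i) = (c i 0, ..., c i (nn i - 1)).\<close>
definition wt_SR :: "nat \<Rightarrow> (nat \<Rightarrow> nat) \<Rightarrow> (nat \<Rightarrow> 'a::ring_1 set) \<Rightarrow> (nat \<Rightarrow> nat \<Rightarrow> 'a) \<Rightarrow> nat" where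
  "wt_SR l nn K c = (\<Sum>i<l. right_dim (K i) (right_span (K i) {c i j | j. j < nn i}))"

end

theory Submission
  imports Defs
begin

text \<open>
  A point of the conjugacy class of \<open>a\<close> is \<open>D_a(\<beta>) \<beta>\<^sup>-\<^sup>1\<close> with \<open>\<beta> \<noteq> 0\<close>; \<open>F\<close> vanishes there iff
  \<open>F\<^sup>D\<^sup>a(\<beta>) = 0\<close>, and \<open>\<beta> \<mapsto> F\<^sup>D\<^sup>a(\<beta>)\<close> is right \<open>K_a\<close>-linear. By the Lam--Leroy bound (a nonzero
  \<open>F\<close> has at most \<open>deg F\<close> roots that are right independent over the centralizers of pairwise
  non-conjugate points), the P-closure of a finite subset of the classes of \<open>a_1, \<dots>, a_l\<close> is the
  set of points \<open>D_a_i(\<beta>) \<beta>\<^sup>-\<^sup>1\<close> with \<open>0 \<noteq> \<beta> \<in> V_i\<close> for right \<open>K_a_i\<close>-subspaces \<open>V_i\<close>, and its rank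
  is \<open>\<Sum>_i dim V_i\<close>. For \<open>\<Omega>\<close> the \<open>V_i\<close> are spanned by the independent \<open>\<alpha>_i_j\<close>, and \<open>Z(F) \<inter> \<Omega>\<close>
  corresponds to the kernels of \<open>F\<^sup>D\<^sup>a\<^sup>i\<close> on the \<open>V_i\<close>; rank--nullity then turns
  \<open>n - Rk(Z(F) \<inter> \<Omega>)\<close> into the sum of the dimensions of the images, the sum-rank weight.
\<close>

section \<open>Right vector spaces over a division subring\<close>

definition division_subring :: "'a::division_ring set \<Rightarrow> bool" where
  "division_subring K \<longleftrightarrow> 0 \<in> K \<and> 1 \<in> K \<and> (\<forall>x\<in>K. \<forall>y\<in>K. x + y \<in> K \<and> x * y \<in> K)
     \<and> (\<forall>x\<in>K. - x \<in> K \<and> inverse x \<in> K)"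

definition right_subspace :: "'a::ring_1 set \<Rightarrow> 'a set \<Rightarrow> bool" where
  "right_subspace K V \<longleftrightarrow> 0 \<in> V \<and> (\<forall>x\<in>V. \<forall>y\<in>V. x + y \<in> V) \<and> (\<forall>x\<in>V. \<forall>k\<in>K. x * k \<in> V)"

definition right_linear :: "'a::ring_1 set \<Rightarrow> ('a \<Rightarrow> 'a) \<Rightarrow> bool" where
  "right_linear K L \<longleftrightarrow> (\<forall>x y. L (x + y) = L x + L y) \<and> (\<forall>x. \<forall>k\<in>K. L (x * k) = L x * k)"

text \<open>Independence of the family \<open>(L t)\<close>, \<open>t \<in> D\<close>; unlike independence of the set \<open>L ` D\<close>
  it also forces \<open>L\<close> to be injective on \<open>D\<close>.\<close>
definition right_indep_family :: "'a::ring_1 set \<Rightarrow> ('a \<Rightarrow> 'a) \<Rightarrow> 'a set \<Rightarrow> bool" where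
  "right_indep_family K L D \<longleftrightarrow> (\<forall>T coef. finite T \<and> T \<subseteq> D \<and> (\<forall>t\<in>T. coef t \<in> K)
     \<and> (\<Sum>t\<in>T. L t * coef t) = 0 \<longrightarrow> (\<forall>t\<in>T. coef t = 0))"

lemma division_subringD:
  assumes "division_subring K"
  shows "0 \<in> K" "1 \<in> K" "x \<in> K \<Longrightarrow> y \<in> K \<Longrightarrow> x + y \<in> K" "x \<in> K \<Longrightarrow> y \<in> K \<Longrightarrow> x * y \<in> K"
    "x \<in> K \<Longrightarrow> - x \<in> K" "x \<in> K \<Longrightarrow> inverse x \<in> K"
  using assms unfolding division_subring_def by auto

lemma division_subring_sum:
  assumes "division_subring K" "\<And>t. t \<in> T \<Longrightarrow> f t \<in> K"
  shows "sum f T \<in> K"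
  using assms(2) by (induction T rule: infinite_finite_induct) (auto intro: division_subringD[OF assms(1)])

lemma right_subspaceD:
  assumes "right_subspace K V"
  shows "0 \<in> V" "x \<in> V \<Longrightarrow> y \<in> V \<Longrightarrow> x + y \<in> V" "x \<in> V \<Longrightarrow> k \<in> K \<Longrightarrow> x * k \<in> V"
  using assms unfolding right_subspace_def by auto

lemma right_subspace_sum:
  assumes "right_subspace K V" "finite T" "\<And>t. t \<in> T \<Longrightarrow> f t \<in> V"
  shows "sum f T \<in> V"
  using assms(2,3) by (induction T rule: finite_induct) (auto intro: right_subspaceD[OF assms(1)])

lemma right_subspace_uminus:
  assumes "right_subspace K V" "division_subring K" "x \<in> V"
  shows "- x \<in> V"
  using right_subspaceD(3)[OF assms(1,3)] division_subringD(2,5)[OF assms(2)] by force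

lemma right_subspace_diff:
  assumes "right_subspace K V" "division_subring K" "x \<in> V" "y \<in> V"
  shows "x - y \<in> V"
  using right_subspaceD(2)[OF assms(1,3) right_subspace_uminus[OF assms(1,2,4)]] by simp

lemma right_subspace_Int: "right_subspace K V \<Longrightarrow> right_subspace K W \<Longrightarrow> right_subspace K (V \<inter> W)"
  unfolding right_subspace_def by blast

lemma right_span_zero: "0 \<in> right_span K S"
  unfolding right_span_def by (auto intro!: exI[of _ "{}"])

lemma right_span_empty: "right_span K {} = {0}"
  unfolding right_span_def by auto

lemma right_span_base:
  assumes "division_subring K" "s \<in> S"
  shows "s \<in> right_span K S"
  unfolding right_span_def using assms division_subringD(2)[OF assms(1)]
  by (auto intro!: exI[of _ "{s}"] exI[of _ "\<lambda>_. 1"])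

lemma right_span_mono: "S \<subseteq> S' \<Longrightarrow> right_span K S \<subseteq> right_span K S'"
  unfolding right_span_def by blast

lemma right_span_lincomb:
  assumes "finite T" "T \<subseteq> S" "\<forall>t\<in>T. c t \<in> K"
  shows "(\<Sum>t\<in>T. t * c t) \<in> right_span K S"
  unfolding right_span_def using assms by blast

lemma right_span_add:
  assumes "division_subring K" "x \<in> right_span K S" "y \<in> right_span K S"
  shows "x + y \<in> right_span K S"
proof -
  obtain T1 c1 where 1: "finite T1" "T1 \<subseteq> S" "\<forall>t\<in>T1. c1 t \<in> K" "x = (\<Sum>t\<in>T1. t * c1 t)"
    using assms(2) unfolding right_span_def by blast
  obtain T2 c2 where 2: "finite T2" "T2 \<subseteq> S" "\<forall>t\<in>T2. c2 t \<in> K" "y = (\<Sum>t\<in>T2. t * c2 t)"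
    using assms(3) unfolding right_span_def by blast
  define d1 where "d1 t = (if t \<in> T1 then c1 t else 0)" for t
  define d2 where "d2 t = (if t \<in> T2 then c2 t else 0)" for t
  have f: "finite (T1 \<union> T2)" using 1 2 by simp
  have "x = (\<Sum>t\<in>T1 \<union> T2. t * d1 t)"
    unfolding 1(4) by (rule sum.mono_neutral_cong_left[OF f]) (auto simp: d1_def)
  moreover have "y = (\<Sum>t\<in>T1 \<union> T2. t * d2 t)"
    unfolding 2(4) by (rule sum.mono_neutral_cong_left[OF f]) (auto simp: d2_def)
  ultimately have "x + y = (\<Sum>t\<in>T1 \<union> T2. t * (d1 t + d2 t))"
    by (simp add: sum.distrib distrib_left)
  moreover have "\<forall>t\<in>T1 \<union> T2. d1 t + d2 t \<in> K"
    using 1(3) 2(3) division_subringD[OF assms(1)] by (auto simp: d1_def d2_def)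
  ultimately show ?thesis using right_span_lincomb[OF f] 1(2) 2(2) by auto
qed

lemma right_span_mult:
  assumes "division_subring K" "x \<in> right_span K S" "k \<in> K"
  shows "x * k \<in> right_span K S"
proof -
  obtain T c where T: "finite T" "T \<subseteq> S" "\<forall>t\<in>T. c t \<in> K" "x = (\<Sum>t\<in>T. t * c t)"
    using assms(2) unfolding right_span_def by blast
  have "x * k = (\<Sum>t\<in>T. t * (c t * k))"
    unfolding T(4) by (simp add: sum_distrib_right mult.assoc)
  moreover have "\<forall>t\<in>T. c t * k \<in> K" using T(3) assms(3) division_subringD(4)[OF assms(1)] by blast
  ultimately show ?thesis using right_span_lincomb[OF T(1,2)] by auto
qed

lemma right_subspace_right_span: "division_subring K \<Longrightarrow> right_subspace K (right_span K S)"
  unfolding right_subspace_def using right_span_zero right_span_add right_span_mult by blast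

lemma right_span_minimal:
  assumes "right_subspace K V" "S \<subseteq> V"
  shows "right_span K S \<subseteq> V"
proof
  fix x assume "x \<in> right_span K S"
  then obtain T c where T: "finite T" "T \<subseteq> S" "\<forall>t\<in>T. c t \<in> K" "x = (\<Sum>t\<in>T. t * c t)"
    unfolding right_span_def by blast
  show "x \<in> V" unfolding T(4)
    by (rule right_subspace_sum[OF assms(1) T(1)]) (use T assms right_subspaceD(3)[OF assms(1)] in blast)
qed

lemma right_span_subset_right_span:
  assumes "division_subring K" "S \<subseteq> right_span K S'"
  shows "right_span K S \<subseteq> right_span K S'"
  using right_span_minimal[OF right_subspace_right_span[OF assms(1)] assms(2)] .

lemma right_span_insert:
  assumes K: "division_subring K" and "v \<in> right_span K (insert s S)"
  shows "\<exists>w k. w \<in> right_span K S \<and> k \<in> K \<and> v = w + s * k"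
proof -
  obtain T c where T: "finite T" "T \<subseteq> insert s S" "\<forall>t\<in>T. c t \<in> K" "v = (\<Sum>t\<in>T. t * c t)"
    using assms(2) unfolding right_span_def by blast
  define k where "k = (if s \<in> T then c s else 0)"
  have "v = (\<Sum>t\<in>T - {s}. t * c t) + s * k"
    using T(1,4) by (cases "s \<in> T") (simp_all add: k_def sum.remove add.commute)
  moreover have "(\<Sum>t\<in>T - {s}. t * c t) \<in> right_span K S"
    using T by (intro right_span_lincomb) auto
  moreover have "k \<in> K" using T(3) division_subringD(1)[OF K] by (simp add: k_def)
  ultimately show ?thesis by blast
qed

lemma right_indepD:
  "right_indep K B \<Longrightarrow> finite T \<Longrightarrow> T \<subseteq> B \<Longrightarrow> \<forall>t\<in>T. c t \<in> K \<Longrightarrow> (\<Sum>t\<in>T. t * c t) = 0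
    \<Longrightarrow> t \<in> T \<Longrightarrow> c t = 0"
  unfolding right_indep_def by blast

lemma right_indep_familyD:
  "right_indep_family K L B \<Longrightarrow> finite T \<Longrightarrow> T \<subseteq> B \<Longrightarrow> \<forall>t\<in>T. c t \<in> K
    \<Longrightarrow> (\<Sum>t\<in>T. L t * c t) = 0 \<Longrightarrow> t \<in> T \<Longrightarrow> c t = 0"
  unfolding right_indep_family_def by blast

lemma right_indep_empty: "right_indep K {}"
  unfolding right_indep_def by simp

lemma right_indep_subset: "right_indep K B \<Longrightarrow> C \<subseteq> B \<Longrightarrow> right_indep K C"
  unfolding right_indep_def by (meson order_trans)

lemma zero_notin_right_indep:
  assumes "division_subring K" "right_indep K B"
  shows "0 \<notin> B"
proof
  assume "0 \<in> B"
  have "(\<lambda>_. 1::'a) 0 = 0"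
    by (rule right_indepD[OF assms(2), of "{0}"]) (use \<open>0 \<in> B\<close> division_subringD(2)[OF assms(1)] in auto)
  then show False by simp
qed

lemma in_right_span_of_dependence:
  assumes "division_subring K" "finite T" "\<forall>t\<in>T. c t \<in> K" "(\<Sum>t\<in>T. t * c t) = (0::'a::division_ring)"
    "s \<in> T" "c s \<noteq> 0"
  shows "s \<in> right_span K (T - {s})"
proof -
  have "(\<Sum>t\<in>T. t * c t) = s * c s + (\<Sum>t\<in>T - {s}. t * c t)"
    using assms(2,5) by (simp add: sum.remove)
  then have e: "s * c s = - (\<Sum>t\<in>T - {s}. t * c t)" using assms(4)
    by (simp add: eq_neg_iff_add_eq_0)
  have "(\<Sum>t\<in>T - {s}. t * c t) \<in> right_span K (T - {s})"
    by (rule right_span_lincomb) (use assms in auto)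
  then have "- (\<Sum>t\<in>T - {s}. t * c t) * inverse (c s) \<in> right_span K (T - {s})"
    using right_span_mult[OF assms(1)] division_subringD(6)[OF assms(1)] assms(3,5)
      right_subspace_uminus[OF right_subspace_right_span[OF assms(1)] assms(1)] by blast
  moreover have "- (\<Sum>t\<in>T - {s}. t * c t) * inverse (c s) = s"
    using e assms(6) by (metis mult.assoc right_inverse mult_1_right)
  ultimately show ?thesis by simp
qed

lemma right_indep_insert:
  assumes "division_subring K" "right_indep K B" "s \<notin> right_span K B"
  shows "right_indep K (insert s B)"
  unfolding right_indep_def
proof (intro allI impI)
  fix T coef assume h: "finite T \<and> T \<subseteq> insert s B \<and> (\<forall>t\<in>T. coef t \<in> K) \<and> (\<Sum>t\<in>T. t * coef t) = 0"
  show "\<forall>t\<in>T. coef t = 0"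
  proof (cases "s \<in> T \<and> coef s \<noteq> 0")
    case True
    then have "s \<in> right_span K (T - {s})" using in_right_span_of_dependence[OF assms(1)] h by blast
    moreover have "right_span K (T - {s}) \<subseteq> right_span K B" using h by (intro right_span_mono) auto
    ultimately show ?thesis using assms(3) by blast
  next
    case False
    have "(\<Sum>t\<in>T. t * coef t) = (\<Sum>t\<in>T - {s}. t * coef t)"
      using False h by (cases "s \<in> T") (auto simp: sum.remove)
    then have "\<forall>t\<in>T - {s}. coef t = 0"
      using right_indepD[OF assms(2), of "T - {s}" coef] h by auto
    then show ?thesis using False by blast
  qed
qed

lemma not_right_indep_imp_in_right_span:
  assumes "division_subring K" "\<not> right_indep K B"
  shows "\<exists>t\<in>B. t \<in> right_span K (B - {t})"
proof -
  obtain T c s where h: "finite T" "T \<subseteq> B" "\<forall>t\<in>T. c t \<in> K" "(\<Sum>t\<in>T. t * c t) = 0"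
    and s: "s \<in> T" "c s \<noteq> 0" using assms(2) unfolding right_indep_def by blast
  have "s \<in> right_span K (T - {s})" using in_right_span_of_dependence[OF assms(1) h(1,3,4) s] .
  moreover have "right_span K (T - {s}) \<subseteq> right_span K (B - {s})" using h by (intro right_span_mono) auto
  ultimately show ?thesis using s h by blast
qed

lemma right_indep_notin_right_span:
  assumes "division_subring K" "right_indep K B" "w \<in> B"
  shows "w \<notin> right_span K (B - {w})"
proof
  assume "w \<in> right_span K (B - {w})"
  then obtain T c where h: "finite T" "T \<subseteq> B - {w}" "\<forall>t\<in>T. c t \<in> K" "w = (\<Sum>t\<in>T. t * c t)"
    unfolding right_span_def by blast
  define c' where "c' = c(w := -1)"
  have wT: "w \<notin> T" using h by blast
  have "(\<Sum>t\<in>insert w T. t * c' t) = w * c' w + (\<Sum>t\<in>T. t * c t)"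
    using h(1) wT by (simp add: c'_def) (intro sum.cong; auto)
  then have "(\<Sum>t\<in>insert w T. t * c' t) = 0" using h(4) by (simp add: c'_def)
  moreover have "\<forall>t\<in>insert w T. c' t \<in> K"
    using h(3) division_subringD(2,5)[OF assms(1)] wT by (auto simp: c'_def)
  moreover have "insert w T \<subseteq> B" using h assms(3) by blast
  ultimately have "c' w = 0" using right_indepD[OF assms(2), of "insert w T" c' w] h(1) by blast
  then show False by (simp add: c'_def)
qed

lemma right_indep_family_inj_on:
  fixes L :: "'a::division_ring \<Rightarrow> 'a"
  assumes "division_subring K" "right_indep_family K L D"
  shows "inj_on L D"
proof (rule inj_onI, rule ccontr)
  fix x y assume h: "x \<in> D" "y \<in> D" "L x = L y" "x \<noteq> y"
  define c where "c t = (if t = x then (1::'a) else - 1)" for t :: 'a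
  have "(\<Sum>t\<in>{x, y}. L t * c t) = 0" using h by (simp add: c_def)
  moreover have "\<forall>t\<in>{x,y}. c t \<in> K" using division_subringD(2,5)[OF assms(1)] by (auto simp: c_def)
  ultimately have "c x = 0" using right_indep_familyD[OF assms(2), of "{x,y}" c x] h by blast
  then show False by (simp add: c_def)
qed

lemma right_indep_image:
  assumes "division_subring K" "right_indep_family K L D"
  shows "right_indep K (L ` D)"
  unfolding right_indep_def
proof (intro allI impI ballI)
  fix T coef u assume h: "finite T \<and> T \<subseteq> L ` D \<and> (\<forall>t\<in>T. coef t \<in> K) \<and> (\<Sum>t\<in>T. t * coef t) = 0" "u \<in> T"
  obtain T0 where T0: "T0 \<subseteq> D" "T = L ` T0" using h subset_image_iff by metis
  have inj: "inj_on L T0" using right_indep_family_inj_on[OF assms] T0 inj_on_subset by blast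
  have fin: "finite T0" using h T0 inj finite_image_iff by metis
  have "(\<Sum>t\<in>T0. L t * coef (L t)) = 0" using h T0 inj by (simp add: sum.reindex)
  then have "\<forall>t\<in>T0. coef (L t) = 0"
    using right_indep_familyD[OF assms(2), of T0 "\<lambda>t. coef (L t)"] fin T0 h by auto
  then show "coef u = 0" using h T0 by blast
qed

lemma right_indep_family_shear:
  fixes B :: "'a::division_ring set"
  assumes K: "division_subring K" and B: "right_indep K B" "b0 \<in> B" and lam: "\<forall>b\<in>B. lam b \<in> K"
  shows "right_indep_family K (\<lambda>b. b - b0 * lam b) (B - {b0})"
  unfolding right_indep_family_def
proof (intro allI impI ballI)
  fix T c t
  assume h: "finite T \<and> T \<subseteq> B - {b0} \<and> (\<forall>t\<in>T. c t \<in> K) \<and> (\<Sum>t\<in>T. (t - b0 * lam t) * c t) = 0" "t \<in> T"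
  define c' where "c' = c(b0 := - (\<Sum>t\<in>T. lam t * c t))"
  have b0T: "b0 \<notin> T" using h by blast
  have "(\<Sum>t\<in>insert b0 T. t * c' t) = (\<Sum>t\<in>T. t * c t) - b0 * (\<Sum>t\<in>T. lam t * c t)"
    using h b0T by (simp add: c'_def sum_distrib_left mult.assoc) (intro sum.cong; auto)
  also have "\<dots> = (\<Sum>t\<in>T. (t - b0 * lam t) * c t)"
    by (simp add: algebra_simps sum_subtractf sum_distrib_left)
  finally have s0: "(\<Sum>t\<in>insert b0 T. t * c' t) = 0" using h by simp
  have "(\<Sum>t\<in>T. lam t * c t) \<in> K"
    using h lam division_subringD(4)[OF K] by (intro division_subring_sum[OF K]) blast
  then have c'K: "\<forall>u\<in>insert b0 T. c' u \<in> K" using h division_subringD(5)[OF K] by (auto simp: c'_def)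
  have "c' t = 0"
    by (rule right_indepD[OF B(1) _ _ c'K s0]) (use h B(2) in auto)
  then show "c t = 0" using b0T h(2) by (auto simp: c'_def split: if_splits)
qed

text \<open>Exchange step: writing \<open>b = w_b + s k_b\<close> with \<open>w_b\<close> in the span of \<open>S\<close>, the shear
  \<open>b \<mapsto> b - b0 (k_b0)\<^sup>-\<^sup>1 k_b\<close> moves \<open>B - {b0}\<close> into that span.\<close>
lemma right_indep_exchange:
  fixes S :: "'a::division_ring set"
  assumes K: "division_subring K" and B: "right_indep K B" "B \<subseteq> right_span K (insert s S)"
    and b0: "b0 \<in> B" "b0 \<notin> right_span K S"
  shows "\<exists>\<phi>. inj_on \<phi> (B - {b0}) \<and> right_indep K (\<phi> ` (B - {b0})) \<and> \<phi> ` (B - {b0}) \<subseteq> right_span K S"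
proof -
  have "\<forall>b\<in>B. \<exists>w k. w \<in> right_span K S \<and> k \<in> K \<and> b = w + s * k"
    using right_span_insert[OF K] B(2) by blast
  then obtain W k where Wk: "\<And>b. b \<in> B \<Longrightarrow> W b \<in> right_span K S \<and> k b \<in> K \<and> b = W b + s * k b"
    by metis
  have k0: "k b0 \<noteq> 0"
  proof
    assume "k b0 = 0"
    then have "b0 = W b0" using Wk[OF b0(1)] by simp
    then show False using Wk[OF b0(1)] b0(2) by simp
  qed
  define lam where "lam b = inverse (k b0) * k b" for b
  have lamK: "\<forall>b\<in>B. lam b \<in> K"
    unfolding lam_def using Wk b0(1) division_subringD(4,6)[OF K] by blast
  define \<phi> where "\<phi> b = b - b0 * lam b" for b
  have "\<phi> b \<in> right_span K S" if b: "b \<in> B" for b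
  proof -
    have "\<phi> b = (W b + s * k b) - (W b0 + s * k b0) * lam b"
      unfolding \<phi>_def using Wk[OF b] Wk[OF b0(1)] by metis
    also have "\<dots> = W b - W b0 * lam b + s * (k b - k b0 * lam b)"
      by (simp add: algebra_simps)
    also have "k b0 * lam b = k b" unfolding lam_def using k0 by (simp add: mult.assoc[symmetric])
    finally have "\<phi> b = W b - W b0 * lam b" by simp
    then show ?thesis
      using right_subspace_diff[OF right_subspace_right_span[OF K] K] right_span_mult[OF K]
        Wk[OF b] Wk[OF b0(1)] lamK b by simp
  qed
  moreover have "right_indep_family K \<phi> (B - {b0})"
    unfolding \<phi>_def by (rule right_indep_family_shear[OF K B(1) b0(1) lamK])
  ultimately show ?thesis using right_indep_family_inj_on[OF K] right_indep_image[OF K] by blast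
qed

lemma right_indep_card_le_finite:
  fixes S :: "'a::division_ring set"
  assumes K: "division_subring K" and "finite S"
  shows "finite B \<Longrightarrow> right_indep K B \<Longrightarrow> B \<subseteq> right_span K S \<Longrightarrow> card B \<le> card S"
  using assms(2)
proof (induction S arbitrary: B rule: finite_induct)
  case empty
  then show ?case using zero_notin_right_indep[OF K] by (auto simp: right_span_empty subset_singleton_iff)
next
  case (insert s S)
  show ?case
  proof (cases "B \<subseteq> right_span K S")
    case True
    then have "card B \<le> card S" using insert by blast
    then show ?thesis using insert by simp
  next
    case False
    then obtain b0 where b0: "b0 \<in> B" "b0 \<notin> right_span K S" by blast
    obtain \<phi> where \<phi>: "inj_on \<phi> (B - {b0})" "right_indep K (\<phi> ` (B - {b0}))"
      "\<phi> ` (B - {b0}) \<subseteq> right_span K S"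
      using right_indep_exchange[OF K insert.prems(2,3) b0] by blast
    have "card (\<phi> ` (B - {b0})) \<le> card S" using insert.IH \<phi>(2,3) insert.prems(1) by simp
    then show ?thesis using insert b0(1) card_image[OF \<phi>(1)] by (simp add: card_Diff_singleton)
  qed
qed

lemma right_indep_card_le:
  fixes S :: "'a::division_ring set"
  assumes K: "division_subring K" and "finite S" "right_indep K B" "B \<subseteq> right_span K S"
  shows "finite B \<and> card B \<le> card S"
proof -
  have "finite B"
  proof (rule ccontr)
    assume "infinite B"
    then obtain B' where "finite B'" "card B' = Suc (card S)" "B' \<subseteq> B"
      using infinite_arbitrarily_large by blast
    then show False
      using right_indep_card_le_finite[OF K assms(2), of B'] right_indep_subset[OF assms(3)] assms(4) by auto
  qed
  then show ?thesis using right_indep_card_le_finite[OF K assms(2)] assms by blast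
qed

lemma right_basis_extend:
  fixes X :: "'a::division_ring set"
  assumes K: "division_subring K" and W: "right_subspace K W" and X: "finite X" "W \<subseteq> right_span K X"
    and C: "C \<subseteq> W" "right_indep K C"
  shows "\<exists>B. C \<subseteq> B \<and> B \<subseteq> W \<and> right_indep K B \<and> finite B \<and> right_span K B = W"
proof -
  let ?P = "\<lambda>B. C \<subseteq> B \<and> B \<subseteq> W \<and> right_indep K B"
  have bnd: "\<forall>B. ?P B \<longrightarrow> card B < Suc (card X)"
    using right_indep_card_le[OF K X(1)] X(2) by (meson less_Suc_eq_le order_trans)
  obtain B where B: "?P B" "\<forall>B'. ?P B' \<longrightarrow> card B' \<le> card B"
    using ex_has_greatest_nat[of ?P C card "Suc (card X)"] C bnd by blast
  have fin: "finite B" using right_indep_card_le[OF K X(1)] X(2) B(1) by blast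
  have "W \<subseteq> right_span K B"
  proof
    fix w assume "w \<in> W"
    show "w \<in> right_span K B"
    proof (rule ccontr)
      assume nw: "w \<notin> right_span K B"
      then have "w \<notin> B" using right_span_base[OF K] by blast
      have "?P (insert w B)" using B(1) \<open>w \<in> W\<close> right_indep_insert[OF K _ nw] by blast
      then have "card (insert w B) \<le> card B" using B(2) by blast
      then show False using fin \<open>w \<notin> B\<close> by simp
    qed
  qed
  then show ?thesis using B fin right_span_minimal[OF W] by blast
qed

lemma right_dim_right_span:
  fixes B :: "'a::division_ring set"
  assumes K: "division_subring K" and "finite B" "right_indep K B"
  shows "right_dim K (right_span K B) = card B"
proof -
  let ?V = "right_span K B"
  have ex: "\<exists>B'. B' \<subseteq> ?V \<and> right_indep K B' \<and> right_span K B' = ?V"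
    using assms right_span_base[OF K] by blast
  define B' where "B' = (SOME B'. B' \<subseteq> ?V \<and> right_indep K B' \<and> right_span K B' = ?V)"
  have B': "B' \<subseteq> ?V" "right_indep K B'" "right_span K B' = ?V"
    using someI_ex[OF ex] unfolding B'_def by blast+
  have 1: "finite B' \<and> card B' \<le> card B" using right_indep_card_le[OF K assms(2) B'(2,1)] .
  have "B \<subseteq> right_span K B'" using B'(3) right_span_base[OF K] by blast
  then have "card B \<le> card B'" using right_indep_card_le[OF K _ assms(3)] 1 by blast
  then show ?thesis unfolding right_dim_def B'_def[symmetric] using 1 by simp
qed

lemma right_linear_zero: "right_linear K L \<Longrightarrow> L 0 = 0"
  unfolding right_linear_def by (metis add_cancel_right_right add_0)

lemma right_linear_add: "right_linear K L \<Longrightarrow> L (x + y) = L x + L y"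
  unfolding right_linear_def by blast

lemma right_linear_mult: "right_linear K L \<Longrightarrow> k \<in> K \<Longrightarrow> L (x * k) = L x * k"
  unfolding right_linear_def by blast

lemma right_linear_sum: "right_linear K L \<Longrightarrow> L (sum f T) = (\<Sum>t\<in>T. L (f t))"
  by (induction T rule: infinite_finite_induct) (auto simp: right_linear_zero right_linear_add)

lemma right_linear_right_span:
  assumes K: "division_subring K" and L: "right_linear K L" and x: "x \<in> right_span K X"
  shows "L x \<in> right_span K (L ` X)"
proof -
  obtain T c where h: "finite T" "T \<subseteq> X" "\<forall>t\<in>T. c t \<in> K" "x = (\<Sum>t\<in>T. t * c t)"
    using x unfolding right_span_def by blast
  have "L x = (\<Sum>t\<in>T. L t * c t)" using h by (simp add: right_linear_sum[OF L] right_linear_mult[OF L])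
  also have "\<dots> \<in> right_span K (L ` X)"
    using h right_span_mult[OF K right_span_base[OF K]]
    by (intro right_subspace_sum[OF right_subspace_right_span[OF K] h(1)]) blast
  finally show ?thesis .
qed

lemma right_subspace_kernel: "right_linear K L \<Longrightarrow> right_subspace K {v. L v = 0}"
  unfolding right_subspace_def using right_linear_zero right_linear_add right_linear_mult by fastforce

lemma right_indep_family_kernel_complement:
  fixes E :: "'a::division_ring set"
  assumes K: "division_subring K" and L: "right_linear K L" and E: "right_indep K E" "B \<subseteq> E"
    and ker: "right_span K E \<inter> {v. L v = 0} \<subseteq> right_span K B"
  shows "right_indep_family K L (E - B)"
  unfolding right_indep_family_def
proof (intro allI impI ballI)
  fix T c t assume h: "finite T \<and> T \<subseteq> E - B \<and> (\<forall>t\<in>T. c t \<in> K) \<and> (\<Sum>t\<in>T. L t * c t) = 0" "t \<in> T"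
  define v where "v = (\<Sum>t\<in>T. t * c t)"
  have "L v = 0" using h unfolding v_def by (simp add: right_linear_sum[OF L] right_linear_mult[OF L])
  moreover have "v \<in> right_span K E" unfolding v_def using h by (intro right_span_lincomb) auto
  ultimately have "v \<in> right_span K B" using ker by blast
  then obtain T' c' where h': "finite T'" "T' \<subseteq> B" "\<forall>t\<in>T'. c' t \<in> K" "v = (\<Sum>t\<in>T'. t * c' t)"
    unfolding right_span_def by blast
  have disj: "T \<inter> T' = {}" using h h' by blast
  define g where "g u = (if u \<in> T then c u else - c' u)" for u
  have "(\<Sum>u\<in>T \<union> T'. u * g u) = (\<Sum>u\<in>T. u * g u) + (\<Sum>u\<in>T'. u * g u)"
    using h h'(1) disj by (simp add: sum.union_disjoint)
  also have "(\<Sum>u\<in>T. u * g u) = v" unfolding v_def g_def by simp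
  also have "(\<Sum>u\<in>T'. u * g u) = - v"
    unfolding h'(4) g_def using disj by (auto simp: sum_negf[symmetric] intro!: sum.cong)
  finally have s0: "(\<Sum>u\<in>T \<union> T'. u * g u) = 0" by simp
  have gK: "\<forall>u\<in>T \<union> T'. g u \<in> K" using h h'(3) division_subringD(5)[OF K] by (auto simp: g_def)
  have "g t = 0"
    by (rule right_indepD[OF E(1) _ _ gK s0]) (use h h' E(2) in auto)
  then show "c t = 0" using h(2) by (simp add: g_def)
qed

lemma right_span_image_cong:
  assumes K: "division_subring K" and L: "right_linear K L" and S: "right_span K S = right_span K S'"
  shows "right_span K (L ` S) = right_span K (L ` S')"
proof -
  have image: "L ` X \<subseteq> right_span K (L ` Y)" if "X \<subseteq> right_span K Y" for X Y
    using right_linear_right_span[OF K L] that by blast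
  have "S \<subseteq> right_span K S'" "S' \<subseteq> right_span K S"
    using S right_span_base[OF K] by blast+
  then show ?thesis
    using right_span_subset_right_span[OF K image] by (simp add: subset_antisym)
qed

lemma right_span_image_Diff_kernel:
  assumes K: "division_subring K" and B: "\<forall>b\<in>B. L b = 0"
  shows "right_span K (L ` (E - B)) = right_span K (L ` E)"
proof
  have "L ` E \<subseteq> right_span K (L ` (E - B))"
  proof
    fix y assume "y \<in> L ` E"
    then obtain e where e: "e \<in> E" "y = L e" by blast
    show "y \<in> right_span K (L ` (E - B))"
    proof (cases "e \<in> B")
      case True
      then show ?thesis using B e(2) right_span_zero by simp
    next
      case False
      then have "L e \<in> L ` (E - B)" using e(1) by blast
      then show ?thesis using right_span_base[OF K] e(2) by simp
    qed
  qed
  then show "right_span K (L ` E) \<subseteq> right_span K (L ` (E - B))"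
    by (rule right_span_subset_right_span[OF K])
qed (intro right_span_mono image_mono Diff_subset)

lemma rank_nullity:
  fixes S :: "'a::division_ring set"
  assumes K: "division_subring K" and L: "right_linear K L" and S: "finite S" "right_indep K S"
  shows "\<exists>B C. finite B \<and> right_indep K B \<and> right_span K B = right_span K S \<inter> {v. L v = 0}
    \<and> finite C \<and> right_indep K C \<and> right_span K C = right_span K (L ` S) \<and> card S = card B + card C"
proof -
  let ?W = "right_span K S \<inter> {v. L v = 0}"
  have W: "right_subspace K ?W"
    using right_subspace_Int[OF right_subspace_right_span[OF K] right_subspace_kernel[OF L]] .
  obtain B where B: "B \<subseteq> ?W" "right_indep K B" "finite B" "right_span K B = ?W"
    using right_basis_extend[OF K W S(1), of "{}"] right_indep_empty by blast
  obtain E where E: "B \<subseteq> E" "right_indep K E" "finite E" "right_span K E = right_span K S"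
    using right_basis_extend[OF K right_subspace_right_span[OF K] S(1) order_refl, of B] B by blast
  have indep: "right_indep_family K L (E - B)"
    using B(4) E by (intro right_indep_family_kernel_complement[OF K L]) auto
  have "\<forall>b\<in>B. L b = 0" using B(1) by blast
  then have "right_span K (L ` (E - B)) = right_span K (L ` E)"
    by (rule right_span_image_Diff_kernel[OF K])
  also have "\<dots> = right_span K (L ` S)" by (rule right_span_image_cong[OF K L E(4)])
  finally have "right_span K (L ` (E - B)) = right_span K (L ` S)" .
  moreover have "card S = card B + card (L ` (E - B))"
  proof -
    have "card E = card S"
      using right_dim_right_span[OF K E(3,2)] right_dim_right_span[OF K S] E(4) by simp
    moreover have "card E = card B + card (E - B)" using E(1,3) B(3)
      by (metis card_Diff_subset le_add_diff_inverse card_mono)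
    ultimately show ?thesis using card_image[OF right_indep_family_inj_on[OF K indep]] by simp
  qed
  ultimately show ?thesis
    using B right_indep_image[OF K indep] E(3) by blast
qed

lemma rank_nullity_card_le:
  fixes S :: "'a::division_ring set"
  assumes K: "division_subring K" and L: "right_linear K L" and S: "finite S" "right_indep K S"
    and Z: "finite Z" "right_span K S \<inter> {v. L v = 0} \<subseteq> right_span K Z"
  shows "\<exists>C. finite C \<and> right_indep K C \<and> right_span K C = right_span K (L ` S) \<and> card S \<le> card Z + card C"
proof -
  obtain B C where BC: "finite B" "right_indep K B" "right_span K B = right_span K S \<inter> {v. L v = 0}"
    "finite C" "right_indep K C" "right_span K C = right_span K (L ` S)" "card S = card B + card C"
    using rank_nullity[OF K L S] by blast
  have "B \<subseteq> right_span K Z" using BC(3) Z(2) right_span_base[OF K, of _ B] by blast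
  then have "card B \<le> card Z" using right_indep_card_le[OF K Z(1) BC(2)] by blast
  then show ?thesis using BC by auto
qed

lemma rank_nullity_right_dim:
  fixes S :: "'a::division_ring set"
  assumes K: "division_subring K" and L: "right_linear K L" and S: "finite S" "right_indep K S"
  shows "card S = right_dim K (right_span K S \<inter> {v. L v = 0}) + right_dim K (right_span K (L ` S))"
proof -
  obtain B C where BC: "finite B" "right_indep K B" "right_span K B = right_span K S \<inter> {v. L v = 0}"
    "finite C" "right_indep K C" "right_span K C = right_span K (L ` S)" "card S = card B + card C"
    using rank_nullity[OF K L S] by blast
  then show ?thesis using right_dim_right_span[OF K BC(1,2)] right_dim_right_span[OF K BC(4,5)] by simp
qed

section \<open>Skew polynomials and the operators \<open>D_a\<close>\<close>

definition degree_less :: "nat \<Rightarrow> (nat \<Rightarrow> 'a::zero) \<Rightarrow> bool" where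
  "degree_less N F \<longleftrightarrow> (\<forall>k\<ge>N. F k = 0)"

lemma degree_less_mono: "degree_less N F \<Longrightarrow> N \<le> M \<Longrightarrow> degree_less M F"
  unfolding degree_less_def by auto

lemma degree_less_imp_spoly: "degree_less N F \<Longrightarrow> spoly F"
  unfolding degree_less_def spoly_def
  by (rule finite_subset[of _ "{..<N}"]) (auto simp: not_le[symmetric])

lemma spoly_imp_degree_less: "spoly F \<Longrightarrow> \<exists>N. degree_less N F"
proof -
  assume "spoly F"
  then have f: "finite {k. F k \<noteq> 0}" unfolding spoly_def .
  show ?thesis
  proof (intro exI[of _ "Suc (Max {k. F k \<noteq> 0})"])
    show "degree_less (Suc (Max {k. F k \<noteq> 0})) F"
      unfolding degree_less_def using Max_ge[OF f] by (metis (mono_tags) Suc_le_eq mem_Collect_eq not_le)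
  qed
qed

locale sigma_delta =
  fixes \<sigma> \<delta> :: "'a::division_ring \<Rightarrow> 'a"
  assumes sigma: "ring_endo \<sigma>" and delta: "sigma_derivation \<sigma> \<delta>"
begin

lemma sigma_add: "\<sigma> (x + y) = \<sigma> x + \<sigma> y" using sigma unfolding ring_endo_def by blast
lemma sigma_mult: "\<sigma> (x * y) = \<sigma> x * \<sigma> y" using sigma unfolding ring_endo_def by blast
lemma sigma_one: "\<sigma> 1 = 1" using sigma unfolding ring_endo_def by blast
lemma sigma_zero: "\<sigma> 0 = 0" using sigma_add[of 0 0] by simp
lemma sigma_nonzero: "x \<noteq> 0 \<Longrightarrow> \<sigma> x \<noteq> 0"
  using sigma_mult[of x "inverse x"] sigma_one by (metis mult_zero_left right_inverse zero_neq_one)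
lemma delta_add: "\<delta> (x + y) = \<delta> x + \<delta> y" using delta unfolding sigma_derivation_def by blast
lemma delta_mult: "\<delta> (x * y) = \<sigma> x * \<delta> y + \<delta> x * y" using delta unfolding sigma_derivation_def by blast
lemma delta_zero: "\<delta> 0 = 0" using delta_add[of 0 0] by simp
lemma delta_one: "\<delta> 1 = 0" using delta_mult[of 1 1] sigma_one by simp

abbreviation D where "D c \<equiv> Dop \<sigma> \<delta> c"
abbreviation K where "K c \<equiv> Kcent \<sigma> \<delta> c"
abbreviation conjugate where "conjugate c b \<equiv> D c b * inverse b"

lemma Dop_add: "D c (x + y) = D c x + D c y"
  unfolding Dop_def by (simp add: sigma_add delta_add distrib_right)
lemma Dop_zero: "D c 0 = 0"
  unfolding Dop_def by (simp add: sigma_zero delta_zero)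
lemma Dop_one: "D c 1 = c"
  unfolding Dop_def by (simp add: sigma_one delta_one)
lemma Dop_mult: "D c (y * b) = \<sigma> y * D c b + \<delta> y * b"
  unfolding Dop_def by (simp add: sigma_mult delta_mult algebra_simps)
lemma Dop_sum: "D c (sum f T) = (\<Sum>t\<in>T. D c (f t))"
  by (induction T rule: infinite_finite_induct) (auto simp: Dop_zero Dop_add)

lemma Dop_mult_Kcent: "k \<in> K c \<Longrightarrow> D c (y * k) = D c y * k"
  unfolding Kcent_def using Dop_mult[of c y k] by (simp add: Dop_def algebra_simps)

lemma Dop_mult_conjugate: "b \<noteq> 0 \<Longrightarrow> D c (y * b) = D (conjugate c b) y * b"
  using Dop_mult[of c y b] by (simp add: Dop_def algebra_simps)

lemma Dop_pow_add: "(D c ^^ i) (x + y) = (D c ^^ i) x + (D c ^^ i) y"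
  by (induction i) (auto simp: Dop_add)
lemma Dop_pow_zero: "(D c ^^ i) 0 = 0"
  by (induction i) (auto simp: Dop_zero)
lemma Dop_pow_mult_Kcent: "k \<in> K c \<Longrightarrow> (D c ^^ i) (y * k) = (D c ^^ i) y * k"
  by (induction i) (auto simp: Dop_mult_Kcent)
lemma Dop_pow_mult_conjugate: "b \<noteq> 0 \<Longrightarrow> (D c ^^ i) (y * b) = (D (conjugate c b) ^^ i) y * b"
  by (induction i) (auto simp: Dop_mult_conjugate)

lemma division_subring_Kcent: "division_subring (K c)"
  unfolding division_subring_def
proof (intro conjI ballI)
  show "0 \<in> K c" unfolding Kcent_def by (simp add: Dop_zero)
  show "1 \<in> K c" unfolding Kcent_def by (simp add: Dop_one)
  fix x assume x: "x \<in> K c"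
  {
    fix y assume y: "y \<in> K c"
    show "x + y \<in> K c" using x y unfolding Kcent_def by (simp add: Dop_add distrib_left)
    show "x * y \<in> K c" using x y Dop_mult_Kcent[OF y, of x] unfolding Kcent_def by (simp add: mult.assoc)
  }
  show "- x \<in> K c" using x Dop_add[of c x "- x"] unfolding Kcent_def
    by (simp add: Dop_zero) (metis add.commute add.right_inverse add_left_cancel)
  show "inverse x \<in> K c"
  proof (cases "x = 0")
    case True then show ?thesis using x by simp
  next
    case False
    have "D c (inverse x * x) = D c (inverse x) * x" using Dop_mult_Kcent[OF x] .
    then have "c = D c (inverse x) * x" using False by (simp add: Dop_one)
    then have "D c (inverse x) = c * inverse x" using False
      by (metis mult.assoc right_inverse mult_1_right)
    then show ?thesis unfolding Kcent_def by simp
  qed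
qed

lemma D_eval_eq_sum:
  assumes "degree_less N F"
  shows "D_eval \<sigma> \<delta> F c y = (\<Sum>k<N. F k * (D c ^^ k) y)"
  unfolding D_eval_def
proof (rule sum.mono_neutral_left)
  show "finite {..<N}" by simp
  show "{i. F i \<noteq> 0} \<subseteq> {..<N}" using assms unfolding degree_less_def by (auto simp: not_less[symmetric])
  show "\<forall>i\<in>{..<N} - {i. F i \<noteq> 0}. F i * (D c ^^ i) y = 0" by simp
qed

lemma right_linear_D_eval:
  assumes "degree_less N F"
  shows "right_linear (K c) (D_eval \<sigma> \<delta> F c)"
  unfolding right_linear_def D_eval_eq_sum[OF assms]
  by (simp add: Dop_pow_add Dop_pow_mult_Kcent distrib_left sum.distrib sum_distrib_right mult.assoc)

lemma D_eval_at_zero: "degree_less N F \<Longrightarrow> D_eval \<sigma> \<delta> F c 0 = 0"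
  by (simp add: D_eval_eq_sum Dop_pow_zero)

lemma D_eval_mult_conjugate:
  assumes "degree_less N F" "b \<noteq> 0"
  shows "D_eval \<sigma> \<delta> F c (y * b) = D_eval \<sigma> \<delta> F (conjugate c b) y * b"
  unfolding D_eval_eq_sum[OF assms(1)] using assms(2)
  by (simp add: Dop_pow_mult_conjugate sum_distrib_right mult.assoc)

lemma D_eval_diff:
  assumes "degree_less N F" "degree_less N G"
  shows "D_eval \<sigma> \<delta> (\<lambda>k. F k - G k) c y = D_eval \<sigma> \<delta> F c y - D_eval \<sigma> \<delta> G c y"
proof -
  have b: "degree_less N (\<lambda>k. F k - G k)" using assms unfolding degree_less_def by simp
  show ?thesis unfolding D_eval_eq_sum[OF b] D_eval_eq_sum[OF assms(1)] D_eval_eq_sum[OF assms(2)]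
    by (simp add: sum_subtractf left_diff_distrib)
qed

lemma degree_less_xmul: "degree_less N H \<Longrightarrow> degree_less (Suc N) (xmul \<sigma> \<delta> H)"
  unfolding degree_less_def xmul_def by (auto simp: sigma_zero delta_zero)

lemma D_eval_xmul:
  assumes "degree_less N H"
  shows "D_eval \<sigma> \<delta> (xmul \<sigma> \<delta> H) c y = D c (D_eval \<sigma> \<delta> H c y)"
proof -
  have hN: "H N = 0" using assms unfolding degree_less_def by simp
  have "D_eval \<sigma> \<delta> (xmul \<sigma> \<delta> H) c y = (\<Sum>k<Suc N. xmul \<sigma> \<delta> H k * (D c ^^ k) y)"
    by (rule D_eval_eq_sum[OF degree_less_xmul[OF assms]])
  also have "\<dots> = (\<Sum>k<Suc N. (if k = 0 then 0 else \<sigma> (H (k - 1))) * (D c ^^ k) y)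
      + (\<Sum>k<Suc N. \<delta> (H k) * (D c ^^ k) y)"
    unfolding xmul_def by (simp add: distrib_right sum.distrib)
  also have "(\<Sum>k<Suc N. (if k = 0 then 0 else \<sigma> (H (k - 1))) * (D c ^^ k) y)
      = (\<Sum>k<N. \<sigma> (H k) * (D c ^^ Suc k) y)"
    by (subst sum.lessThan_Suc_shift) simp
  also have "(\<Sum>k<Suc N. \<delta> (H k) * (D c ^^ k) y) = (\<Sum>k<N. \<delta> (H k) * (D c ^^ k) y)"
    using hN by (simp add: delta_zero)
  also have "(\<Sum>k<N. \<sigma> (H k) * (D c ^^ Suc k) y) + (\<Sum>k<N. \<delta> (H k) * (D c ^^ k) y)
      = (\<Sum>k<N. D c (H k * (D c ^^ k) y))"
    by (simp add: Dop_mult sum.distrib)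
  also have "\<dots> = D c (D_eval \<sigma> \<delta> H c y)"
    unfolding D_eval_eq_sum[OF assms] by (simp add: Dop_sum)
  finally show ?thesis .
qed

lemma degree_less_xmul_pow: "degree_less N H \<Longrightarrow> degree_less (N + i) ((xmul \<sigma> \<delta> ^^ i) H)"
  by (induction i) (auto simp: degree_less_xmul)

lemma D_eval_xmul_pow:
  assumes "degree_less N H"
  shows "D_eval \<sigma> \<delta> ((xmul \<sigma> \<delta> ^^ i) H) c y = (D c ^^ i) (D_eval \<sigma> \<delta> H c y)"
  by (induction i) (auto simp: D_eval_xmul[OF degree_less_xmul_pow[OF assms]])

lemma skew_mult_eq_sum:
  assumes "degree_less M G"
  shows "skew_mult \<sigma> \<delta> G H = (\<lambda>k. \<Sum>i<M. G i * ((xmul \<sigma> \<delta> ^^ i) H) k)"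
  unfolding skew_mult_def
proof (rule ext, rule sum.mono_neutral_left)
  show "finite {..<M}" by simp
  show "{i. G i \<noteq> 0} \<subseteq> {..<M}" using assms unfolding degree_less_def by (auto simp: not_less[symmetric])
qed auto

lemma degree_less_skew_mult:
  assumes "degree_less M G" "degree_less N H"
  shows "degree_less (M + N) (skew_mult \<sigma> \<delta> G H)"
  unfolding degree_less_def skew_mult_eq_sum[OF assms(1)]
proof (intro allI impI sum.neutral ballI)
  fix k i assume "M + N \<le> k" "i \<in> {..<M}"
  then have "((xmul \<sigma> \<delta> ^^ i) H) k = 0"
    using degree_less_xmul_pow[OF assms(2), of i] unfolding degree_less_def by auto
  then show "G i * (xmul \<sigma> \<delta> ^^ i) H k = 0" by simp
qed

lemma D_eval_skew_mult:
  assumes "degree_less M G" "degree_less N H"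
  shows "D_eval \<sigma> \<delta> (skew_mult \<sigma> \<delta> G H) c y = D_eval \<sigma> \<delta> G c (D_eval \<sigma> \<delta> H c y)"
proof -
  let ?X = "\<lambda>i. (xmul \<sigma> \<delta> ^^ i) H"
  have "D_eval \<sigma> \<delta> (skew_mult \<sigma> \<delta> G H) c y
      = (\<Sum>k<M + N. (\<Sum>i<M. G i * ?X i k) * (D c ^^ k) y)"
    using D_eval_eq_sum[OF degree_less_skew_mult[OF assms]] skew_mult_eq_sum[OF assms(1)] by simp
  also have "\<dots> = (\<Sum>i<M. G i * (\<Sum>k<M + N. ?X i k * (D c ^^ k) y))"
    by (simp add: sum_distrib_right sum_distrib_left mult.assoc sum.swap[of _ "{..<M + N}"])
  also have "\<dots> = (\<Sum>i<M. G i * (D c ^^ i) (D_eval \<sigma> \<delta> H c y))"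
  proof (rule sum.cong[OF refl])
    fix i assume "i \<in> {..<M}"
    then have b: "degree_less (M + N) (?X i)" using degree_less_xmul_pow[OF assms(2), of i] degree_less_mono by fastforce
    show "G i * (\<Sum>k<M + N. ?X i k * (D c ^^ k) y) = G i * (D c ^^ i) (D_eval \<sigma> \<delta> H c y)"
      using D_eval_eq_sum[OF b, of c y, symmetric] D_eval_xmul_pow[OF assms(2), of i] by simp
  qed
  also have "\<dots> = D_eval \<sigma> \<delta> G c (D_eval \<sigma> \<delta> H c y)"
    using D_eval_eq_sum[OF assms(1)] by simp
  finally show ?thesis .
qed

lemma degree_less_x_minus: "degree_less 2 (x_minus a)"
  unfolding degree_less_def x_minus_def by auto

lemma D_eval_x_minus: "D_eval \<sigma> \<delta> (x_minus a) c y = D c y - a * y"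
  unfolding D_eval_eq_sum[OF degree_less_x_minus] by (simp add: x_minus_def numeral_2_eq_2)

lemma xmul_pow_x_minus_lead: "degree_less (Suc (Suc m)) ((xmul \<sigma> \<delta> ^^ m) (x_minus a)) \<and> ((xmul \<sigma> \<delta> ^^ m) (x_minus a)) (Suc m) = 1"
proof (induction m)
  case 0 then show ?case using degree_less_x_minus by (simp add: x_minus_def numeral_2_eq_2)
next
  case (Suc m)
  then have "degree_less (Suc (Suc (Suc m))) ((xmul \<sigma> \<delta> ^^ Suc m) (x_minus a))"
    using degree_less_xmul by simp
  moreover have "((xmul \<sigma> \<delta> ^^ Suc m) (x_minus a)) (Suc (Suc m)) = 1"
    using Suc unfolding degree_less_def
    by (simp add: xmul_def[of \<sigma> \<delta> "(xmul \<sigma> \<delta> ^^ m) (x_minus a)"] sigma_one delta_zero)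
  ultimately show ?case by simp
qed

lemma skew_mult_zero_left: "skew_mult \<sigma> \<delta> (\<lambda>_. 0) H = (\<lambda>_. 0)"
  unfolding skew_mult_def by simp

lemma skew_mult_add_left:
  assumes "degree_less M G1" "degree_less M G2"
  shows "skew_mult \<sigma> \<delta> (\<lambda>i. G1 i + G2 i) H = (\<lambda>k. skew_mult \<sigma> \<delta> G1 H k + skew_mult \<sigma> \<delta> G2 H k)"
proof -
  have b: "degree_less M (\<lambda>i. G1 i + G2 i)" using assms unfolding degree_less_def by simp
  show ?thesis unfolding skew_mult_eq_sum[OF b] skew_mult_eq_sum[OF assms(1)] skew_mult_eq_sum[OF assms(2)]
    by (simp add: distrib_right sum.distrib)
qed

lemma division_by_x_minus:
  "degree_less (Suc N) F \<Longrightarrow> \<exists>G c. degree_less N G \<and>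
     (\<lambda>k. F k - (if k = 0 then c else 0)) = skew_mult \<sigma> \<delta> G (x_minus a)"
proof (induction N arbitrary: F)
  case 0
  have "(\<lambda>k. F k - (if k = 0 then F 0 else 0)) = skew_mult \<sigma> \<delta> (\<lambda>_. 0) (x_minus a)"
    using 0 unfolding skew_mult_zero_left degree_less_def by auto
  moreover have "degree_less 0 (\<lambda>_. 0::'a)" unfolding degree_less_def by simp
  ultimately show ?case by blast
next
  case (Suc m)
  define f where "f = F (Suc m)"
  define G0 where "G0 i = (if i = m then f else 0)" for i
  let ?X = "x_minus a"
  have bG0: "degree_less (Suc m) G0" unfolding degree_less_def G0_def by simp
  have P0: "skew_mult \<sigma> \<delta> G0 ?X = (\<lambda>k. f * ((xmul \<sigma> \<delta> ^^ m) ?X) k)"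
    unfolding skew_mult_eq_sum[OF bG0] by (simp add: G0_def if_distrib sum.delta' cong: if_cong)
  define F' where "F' k = F k - skew_mult \<sigma> \<delta> G0 ?X k" for k
  have bF': "degree_less (Suc m) F'"
    unfolding degree_less_def
  proof (intro allI impI)
    fix k assume k: "Suc m \<le> k"
    show "F' k = 0"
    proof (cases "k = Suc m")
      case True then show ?thesis using xmul_pow_x_minus_lead[of m a] by (simp add: F'_def P0 f_def)
    next
      case False
      then have "Suc (Suc m) \<le> k" using k by simp
      then show ?thesis using xmul_pow_x_minus_lead[of m a] Suc.prems unfolding degree_less_def F'_def P0 by simp
    qed
  qed
  obtain G' c where G': "degree_less m G'" "(\<lambda>k. F' k - (if k = 0 then c else 0)) = skew_mult \<sigma> \<delta> G' ?X"
    using Suc.IH[OF bF'] by blast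
  define G where "G i = G' i + G0 i" for i
  have bG: "degree_less (Suc m) G" using G'(1) bG0 unfolding degree_less_def G_def by simp
  have "skew_mult \<sigma> \<delta> G ?X = (\<lambda>k. skew_mult \<sigma> \<delta> G' ?X k + skew_mult \<sigma> \<delta> G0 ?X k)"
    unfolding G_def by (rule skew_mult_add_left[OF degree_less_mono[OF G'(1), of "Suc m"] bG0]) simp
  also have "\<dots> = (\<lambda>k. F k - (if k = 0 then c else 0))"
    unfolding G'(2)[symmetric] F'_def by simp
  finally show ?case using bG by metis
qed

lemma remainder_by_x_minus:
  assumes "spoly G" "degree_less N F"
    "(\<lambda>k. F k - (if k = 0 then c else 0)) = skew_mult \<sigma> \<delta> G (x_minus a)"
  shows "c = D_eval \<sigma> \<delta> F a 1"
proof -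
  obtain M where M: "degree_less M G" using spoly_imp_degree_less[OF assms(1)] by blast
  have bF: "degree_less (Suc N) F" using assms(2) degree_less_mono by fastforce
  have bC: "degree_less (Suc N) (\<lambda>k. if k = 0 then c else 0)" unfolding degree_less_def by simp
  have "D_eval \<sigma> \<delta> (\<lambda>k. F k - (if k = 0 then c else 0)) a 1 = D_eval \<sigma> \<delta> F a 1 - c"
    unfolding D_eval_diff[OF bF bC] D_eval_eq_sum[OF bC] by (subst sum.lessThan_Suc_shift) simp
  moreover have "D_eval \<sigma> \<delta> (skew_mult \<sigma> \<delta> G (x_minus a)) a 1 = 0"
    unfolding D_eval_skew_mult[OF M degree_less_x_minus] D_eval_x_minus using Dop_one D_eval_at_zero[OF M] by simp
  ultimately show ?thesis using assms(3) by simp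
qed

lemma skew_eval_eq_D_eval:
  assumes "degree_less N F"
  shows "skew_eval \<sigma> \<delta> F a = D_eval \<sigma> \<delta> F a 1"
  unfolding skew_eval_def
proof (rule the_equality)
  obtain G c where "degree_less N G" "(\<lambda>k. F k - (if k = 0 then c else 0)) = skew_mult \<sigma> \<delta> G (x_minus a)"
    using division_by_x_minus[OF degree_less_mono[OF assms, of "Suc N"], where a=a] by auto
  moreover then have "c = D_eval \<sigma> \<delta> F a 1" using remainder_by_x_minus degree_less_imp_spoly assms by blast
  ultimately show "\<exists>G. spoly G \<and> (\<lambda>k. F k - (if k = 0 then D_eval \<sigma> \<delta> F a 1 else 0)) = skew_mult \<sigma> \<delta> G (x_minus a)"
    using degree_less_imp_spoly by blast
next
  fix c assume "\<exists>G. spoly G \<and> (\<lambda>k. F k - (if k = 0 then c else 0)) = skew_mult \<sigma> \<delta> G (x_minus a)"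
  then show "c = D_eval \<sigma> \<delta> F a 1" using remainder_by_x_minus assms by blast
qed

lemma skew_eval_conjugate:
  assumes "degree_less N F" "b \<noteq> 0"
  shows "skew_eval \<sigma> \<delta> F (conjugate c b) = D_eval \<sigma> \<delta> F c b * inverse b"
  using D_eval_mult_conjugate[OF assms, of c 1] assms(2)
  by (simp add: skew_eval_eq_D_eval[OF assms(1)] mult.assoc)

lemma skew_eval_conjugate_eq_0_iff:
  assumes "degree_less N F" "b \<noteq> 0"
  shows "skew_eval \<sigma> \<delta> F (conjugate c b) = 0 \<longleftrightarrow> D_eval \<sigma> \<delta> F c b = 0"
  using skew_eval_conjugate[OF assms] assms(2) by simp

lemma factor_x_minus_root:
  assumes "degree_less (Suc m) f" "skew_eval \<sigma> \<delta> f q = 0"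
  shows "\<exists>G. degree_less m G \<and> f = skew_mult \<sigma> \<delta> G (x_minus q)"
proof -
  obtain G c where G: "degree_less m G" "(\<lambda>k. f k - (if k = 0 then c else 0)) = skew_mult \<sigma> \<delta> G (x_minus q)"
    using division_by_x_minus[OF assms(1)] by blast
  have "c = 0"
    using remainder_by_x_minus[OF degree_less_imp_spoly[OF G(1)] assms(1) G(2)] assms(2)
    by (simp add: skew_eval_eq_D_eval[OF assms(1)])
  then show ?thesis using G by auto
qed

section \<open>Conjugacy classes\<close>

lemma conj_class_iff: "p \<in> conj_class \<sigma> \<delta> c \<longleftrightarrow> (\<exists>b. b \<noteq> 0 \<and> p = conjugate c b)"
  unfolding conj_class_def by auto

lemma conjugate_conjugate:
  assumes "b \<noteq> 0" "y \<noteq> 0"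
  shows "conjugate (conjugate c b) y = conjugate c (y * b)"
proof -
  have "conjugate c (y * b) = D (conjugate c b) y * b * (inverse b * inverse y)"
    using Dop_mult_conjugate[OF assms(1), of c y] assms by (simp add: nonzero_inverse_mult_distrib)
  also have "\<dots> = D (conjugate c b) y * inverse y"
  proof -
    have "b * (inverse b * inverse y) = inverse y" using assms(1) by (simp add: mult.assoc[symmetric])
    then show ?thesis by (simp add: mult.assoc)
  qed
  finally show ?thesis by simp
qed

lemma conj_class_trans:
  assumes "p \<in> conj_class \<sigma> \<delta> c" "q \<in> conj_class \<sigma> \<delta> p"
  shows "q \<in> conj_class \<sigma> \<delta> c"
proof -
  obtain b y where "b \<noteq> 0" "p = conjugate c b" "y \<noteq> 0" "q = conjugate p y"
    using assms conj_class_iff by blast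
  then show ?thesis unfolding conj_class_iff by (metis conjugate_conjugate no_zero_divisors)
qed

lemma conj_class_sym:
  assumes "p \<in> conj_class \<sigma> \<delta> c"
  shows "c \<in> conj_class \<sigma> \<delta> p"
proof -
  obtain b where b: "b \<noteq> 0" "p = conjugate c b" using assms conj_class_iff by blast
  then have "conjugate p (inverse b) = conjugate c 1"
    using conjugate_conjugate[OF b(1), of "inverse b" c] by simp
  then show ?thesis unfolding conj_class_iff using b(1) Dop_one by (metis inverse_nonzero_iff_nonzero
      inverse_1 mult_1_right)
qed

lemma conj_class_common:
  "q \<in> conj_class \<sigma> \<delta> c \<Longrightarrow> q \<in> conj_class \<sigma> \<delta> d \<Longrightarrow> d \<in> conj_class \<sigma> \<delta> c"
  using conj_class_trans conj_class_sym by blast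

lemma conjugate_eq_imp_Kcent_multiple:
  assumes "b \<noteq> 0" "y \<noteq> 0" "conjugate c b = conjugate c y"
  shows "\<exists>t\<in>K c. y = b * t"
proof -
  define t where "t = inverse b * y"
  have bt: "b * t = y" unfolding t_def using assms(1) by (simp add: mult.assoc[symmetric])
  have "D c (b * t) = conjugate c y * y" using assms(2) bt by (simp add: mult.assoc)
  also have "\<dots> = D c b * t" unfolding t_def assms(3)[symmetric] by (simp add: mult.assoc)
  also have "\<dots> = \<sigma> b * (c * t) + \<delta> b * t" by (simp add: Dop_def algebra_simps)
  finally have "\<sigma> b * D c t = \<sigma> b * (c * t)" by (simp add: Dop_mult)
  then have "D c t = c * t" using sigma_nonzero[OF assms(1)] by simp
  then show ?thesis using bt unfolding Kcent_def by auto
qed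

lemma Dop_eq_conjugate_mult_imp_right_span:
  assumes "b \<noteq> 0" "D c y = conjugate c b * y"
  shows "y \<in> right_span (K c) {b}"
proof (cases "y = 0")
  case True
  then show ?thesis by (simp add: right_span_zero)
next
  case False
  then have "conjugate c y = conjugate c b" using assms(2) by (simp add: mult.assoc)
  then obtain t where "t \<in> K c" "y = b * t"
    using conjugate_eq_imp_Kcent_multiple[OF assms(1) False] by metis
  then show ?thesis
    using right_span_mult[OF division_subring_Kcent right_span_base[OF division_subring_Kcent]] by blast
qed

lemma Dop_eq_mult_imp_zero:
  assumes "q \<notin> conj_class \<sigma> \<delta> c" "D c y = q * y"
  shows "y = 0"
  using assms conj_class_iff by (metis mult.assoc right_inverse mult_1_right)

section \<open>Independent roots and the Lam--Leroy bound\<close>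

definition pairwise_nonconj :: "nat \<Rightarrow> (nat \<Rightarrow> 'a) \<Rightarrow> bool" where
  "pairwise_nonconj r c \<longleftrightarrow> (\<forall>i<r. \<forall>j<r. i \<noteq> j \<longrightarrow> c j \<notin> conj_class \<sigma> \<delta> (c i))"

lemma pairwise_nonconj_extend:
  assumes "pairwise_nonconj r c" "\<forall>i<r. p \<notin> conj_class \<sigma> \<delta> (c i)"
  shows "pairwise_nonconj (Suc r) (c(r := p))"
  using assms conj_class_sym unfolding pairwise_nonconj_def by (auto simp: less_Suc_eq)

text \<open>If \<open>f'\<close> kills \<open>P\<close> but takes the value \<open>v \<noteq> 0\<close> at \<open>(c, y)\<close>, then \<open>(x - q) f'\<close> with
  \<open>q = conjugate c v\<close> kills \<open>insert (c, y) P\<close>: left multiplication by \<open>x - q\<close> acts on values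
  as \<open>D_c - q\<close>.\<close>
lemma exists_monic_annihilator:
  "finite P \<Longrightarrow> \<exists>f d. degree_less (Suc d) f \<and> f d = 1 \<and> d \<le> card P
     \<and> (\<forall>(c, y)\<in>P. D_eval \<sigma> \<delta> f c y = 0)"
proof (induction P rule: finite_induct)
  case empty
  have "degree_less (Suc 0) (\<lambda>k. if k = 0 then (1::'a) else 0)" unfolding degree_less_def by simp
  then show ?case by fastforce
next
  case (insert x P)
  obtain c0 y0 where x: "x = (c0, y0)" by fastforce
  obtain f' d where f': "degree_less (Suc d) f'" "f' d = 1" "d \<le> card P"
    "\<forall>(c, y)\<in>P. D_eval \<sigma> \<delta> f' c y = 0" using insert.IH by blast
  define v where "v = D_eval \<sigma> \<delta> f' c0 y0"
  show ?case
  proof (cases "v = 0")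
    case True
    then show ?thesis using f' insert(1,2) v_def x by (intro exI[of _ f'] exI[of _ d]) auto
  next
    case False
    define q where "q = conjugate c0 v"
    define f where "f = skew_mult \<sigma> \<delta> (x_minus q) f'"
    have f_coeff: "f = (\<lambda>k. - q * f' k + xmul \<sigma> \<delta> f' k)"
      unfolding f_def skew_mult_eq_sum[OF degree_less_x_minus] by (simp add: numeral_2_eq_2 x_minus_def)
    have "degree_less (Suc (Suc d)) f" "f (Suc d) = 1"
      using f' unfolding f_coeff degree_less_def xmul_def by (auto simp: sigma_zero sigma_one delta_zero)
    moreover have ev: "D_eval \<sigma> \<delta> f c y = D c (D_eval \<sigma> \<delta> f' c y) - q * D_eval \<sigma> \<delta> f' c y" for c y
      unfolding f_def D_eval_skew_mult[OF degree_less_x_minus f'(1)] D_eval_x_minus ..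
    have "D_eval \<sigma> \<delta> f c0 y0 = 0"
      unfolding ev v_def[symmetric] q_def using False by (simp add: mult.assoc)
    then have "\<forall>(c, y)\<in>insert x P. D_eval \<sigma> \<delta> f c y = 0"
      using f'(4) x by (auto simp: ev Dop_zero)
    moreover have "Suc d \<le> card (insert x P)" using f'(3) insert(1,2) by simp
    ultimately show ?thesis by blast
  qed
qed

lemma exists_annihilator_of_right_spans:
  fixes r :: nat
  assumes "\<forall>i<r. finite (\<beta> i)"
  shows "\<exists>f d. degree_less (Suc d) f \<and> f \<noteq> (\<lambda>_. 0) \<and> d \<le> (\<Sum>i<r. card (\<beta> i))
    \<and> (\<forall>i<r. \<forall>y\<in>right_span (K (c i)) (\<beta> i). D_eval \<sigma> \<delta> f (c i) y = 0)"
proof -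
  define P where "P = (\<Union>i<r. Pair (c i) ` \<beta> i)"
  have "finite P" unfolding P_def using assms by (simp add: finite_UN)
  then obtain f d where f: "degree_less (Suc d) f" "f d = 1" "d \<le> card P"
    "\<forall>(c, y)\<in>P. D_eval \<sigma> \<delta> f c y = 0" using exists_monic_annihilator by blast
  have "card P \<le> (\<Sum>i<r. card (Pair (c i) ` \<beta> i))" unfolding P_def by (rule card_UN_le) simp
  also have "\<dots> \<le> (\<Sum>i<r. card (\<beta> i))" by (intro sum_mono card_image_le) (use assms in auto)
  finally have "d \<le> (\<Sum>i<r. card (\<beta> i))" using f(3) by simp
  moreover have "right_span (K (c i)) (\<beta> i) \<subseteq> {y. D_eval \<sigma> \<delta> f (c i) y = 0}" if "i < r" for i
    using f(4) that unfolding P_def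
    by (intro right_span_minimal[OF right_subspace_kernel[OF right_linear_D_eval[OF f(1)]]]) blast
  moreover have "f \<noteq> (\<lambda>_. 0)" using f(2) by auto
  ultimately show ?thesis using f(1) by blast
qed

lemma right_linear_Dop_minus_mult: "right_linear (K c) (\<lambda>y. D c y - q * y)"
  unfolding right_linear_def by (simp add: Dop_add Dop_mult_Kcent algebra_simps)

lemma kernel_Dop_minus_conjugate:
  assumes "pairwise_nonconj r c" "i < r" "j < r" "b \<noteq> 0"
  shows "{y. D (c j) y - conjugate (c i) b * y = 0} \<subseteq> right_span (K (c j)) (if j = i then {b} else {})"
proof (cases "j = i")
  case True
  then show ?thesis using Dop_eq_conjugate_mult_imp_right_span[OF assms(4)] by auto
next
  case False
  have "conjugate (c i) b \<notin> conj_class \<sigma> \<delta> (c j)"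
    using assms False conj_class_common[of _ "c i" "c j"] conj_class_iff unfolding pairwise_nonconj_def by blast
  then show ?thesis using Dop_eq_mult_imp_zero False by (auto simp: right_span_empty)
qed

text \<open>By the product rule \<open>G (x - q)\<close> takes at \<open>(c, y)\<close> the value of \<open>G\<close> at \<open>(c, D_c y - q y)\<close>.\<close>
lemma indep_roots_of_cofactor:
  assumes G: "degree_less m G" and \<gamma>: "finite \<gamma>" "right_indep (K c) \<gamma>"
    "\<forall>b\<in>\<gamma>. D_eval \<sigma> \<delta> (skew_mult \<sigma> \<delta> G (x_minus q)) c b = 0"
    and Z: "finite Z" "{y. D c y - q * y = 0} \<subseteq> right_span (K c) Z"
  shows "\<exists>C. finite C \<and> right_indep (K c) C \<and> (\<forall>y\<in>C. D_eval \<sigma> \<delta> G c y = 0) \<and> card \<gamma> \<le> card Z + card C"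
proof -
  let ?L = "\<lambda>y. D c y - q * y"
  obtain C where C: "finite C" "right_indep (K c) C" "right_span (K c) C = right_span (K c) (?L ` \<gamma>)"
    "card \<gamma> \<le> card Z + card C"
    using rank_nullity_card_le[OF division_subring_Kcent right_linear_Dop_minus_mult \<gamma>(1,2) Z(1)] Z(2) by blast
  have "?L ` \<gamma> \<subseteq> {y. D_eval \<sigma> \<delta> G c y = 0}"
    using \<gamma>(3) unfolding D_eval_skew_mult[OF G degree_less_x_minus] D_eval_x_minus by blast
  then have "right_span (K c) C \<subseteq> {y. D_eval \<sigma> \<delta> G c y = 0}"
    unfolding C(3) by (rule right_span_minimal[OF right_subspace_kernel[OF right_linear_D_eval[OF G]]])
  then show ?thesis using C right_span_base[OF division_subring_Kcent] by blast
qed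

text \<open>A root \<open>b\<close> over \<open>c_i\<close> splits off the factor \<open>x - conjugate c_i b\<close>;
  the kernel of \<open>D_c_j - conjugate c_i b\<close> is the line \<open>b K_c_i\<close> for \<open>j = i\<close> and zero otherwise,
  so at most one dimension of roots is lost.\<close>
lemma sum_card_indep_roots_less:
  "degree_less m f \<Longrightarrow> f \<noteq> (\<lambda>_. 0) \<Longrightarrow> pairwise_nonconj r c \<Longrightarrow>
   \<forall>j<r. finite (\<gamma> j) \<and> right_indep (K (c j)) (\<gamma> j) \<and> (\<forall>b\<in>\<gamma> j. D_eval \<sigma> \<delta> f (c j) b = 0) \<Longrightarrow>
   (\<Sum>j<r. card (\<gamma> j)) < m"
proof (induction m arbitrary: f \<gamma>)
  case 0
  then show ?case by (auto simp: degree_less_def)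
next
  case (Suc m f \<gamma>)
  show ?case
  proof (cases "\<forall>j<r. \<gamma> j = {}")
    case True
    then show ?thesis by simp
  next
    case False
    then obtain i b where i: "i < r" "b \<in> \<gamma> i" by blast
    have b: "b \<noteq> 0" using zero_notin_right_indep[OF division_subring_Kcent] Suc.prems(4) i by blast
    have "skew_eval \<sigma> \<delta> f (conjugate (c i) b) = 0"
      using Suc.prems(4) i skew_eval_conjugate_eq_0_iff[OF Suc.prems(1) b] by blast
    then obtain G where G: "degree_less m G" "f = skew_mult \<sigma> \<delta> G (x_minus (conjugate (c i) b))"
      using factor_x_minus_root[OF Suc.prems(1)] by blast
    have "G \<noteq> (\<lambda>_. 0)" using G(2) Suc.prems(2) skew_mult_zero_left by auto
    define Z where "Z j = (if j = i then {b} else {})" for j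
    have "\<exists>C. finite C \<and> right_indep (K (c j)) C \<and> (\<forall>y\<in>C. D_eval \<sigma> \<delta> G (c j) y = 0)
      \<and> card (\<gamma> j) \<le> card (Z j) + card C" if "j < r" for j
      using Suc.prems(4) that kernel_Dop_minus_conjugate[OF Suc.prems(3) i(1) that b] unfolding G(2) Z_def
      by (intro indep_roots_of_cofactor[OF G(1)]) auto
    then obtain C where C: "\<forall>j<r. finite (C j) \<and> right_indep (K (c j)) (C j)
      \<and> (\<forall>y\<in>C j. D_eval \<sigma> \<delta> G (c j) y = 0) \<and> card (\<gamma> j) \<le> card (Z j) + card (C j)"
      by metis
    have "(\<Sum>j<r. card (\<gamma> j)) \<le> (\<Sum>j<r. card (Z j) + card (C j))"
      using C by (intro sum_mono) auto
    also have "\<dots> = (\<Sum>j<r. card (Z j)) + (\<Sum>j<r. card (C j))" by (rule sum.distrib)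
    also have "(\<Sum>j<r. card (Z j)) = 1" using i(1) by (simp add: Z_def if_distrib[of card] sum.If_cases)
    also have "(\<Sum>j<r. card (C j)) < m"
      using Suc.IH[OF G(1) \<open>G \<noteq> _\<close> Suc.prems(3)] C by blast
    finally show ?thesis by simp
  qed
qed

lemma roots_in_right_span:
  assumes "pairwise_nonconj r c" "degree_less (Suc d) f" "f \<noteq> (\<lambda>_. 0)"
    and \<beta>: "\<forall>j<r. finite (\<beta> j) \<and> right_indep (K (c j)) (\<beta> j) \<and> (\<forall>b\<in>\<beta> j. D_eval \<sigma> \<delta> f (c j) b = 0)"
    and "d \<le> (\<Sum>j<r. card (\<beta> j))" "i < r" "D_eval \<sigma> \<delta> f (c i) w = 0"
  shows "w \<in> right_span (K (c i)) (\<beta> i)"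
proof (rule ccontr)
  assume w: "w \<notin> right_span (K (c i)) (\<beta> i)"
  then have "w \<notin> \<beta> i" using right_span_base[OF division_subring_Kcent] by blast
  define \<gamma> where "\<gamma> = \<beta>(i := insert w (\<beta> i))"
  have "(\<Sum>j<r. card (\<gamma> j)) < Suc d"
    using \<beta> \<open>i < r\<close> right_indep_insert[OF division_subring_Kcent _ w] assms(7) unfolding \<gamma>_def
    by (intro sum_card_indep_roots_less[OF assms(2,3,1)]) auto
  moreover have "(\<Sum>j<r. card (\<gamma> j)) = (\<Sum>j<r. card (\<beta> j)) + 1"
    using \<open>i < r\<close> \<open>w \<notin> \<beta> i\<close> \<beta> unfolding \<gamma>_def
    by (simp add: sum.If_cases Int_absorb1 sum.remove[of "{..<r}" i] Diff_eq[symmetric])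
  ultimately show False using assms(5) by simp
qed

section \<open>P-closures of sets of conjugates\<close>

definition lift :: "'a \<Rightarrow> 'a set \<Rightarrow> 'a set" where
  "lift c S = {x. x \<noteq> 0 \<and> conjugate c x \<in> S}"

definition conj_rep :: "'a \<Rightarrow> 'a \<Rightarrow> 'a" where
  "conj_rep c s = (SOME x. x \<noteq> 0 \<and> conjugate c x = s)"

lemma conj_rep:
  assumes "s \<in> conj_class \<sigma> \<delta> c"
  shows "conj_rep c s \<noteq> 0" "conjugate c (conj_rep c s) = s"
proof -
  have "\<exists>x. x \<noteq> 0 \<and> conjugate c x = s" using assms conj_class_iff by metis
  then show "conj_rep c s \<noteq> 0" "conjugate c (conj_rep c s) = s"
    unfolding conj_rep_def by (metis (mono_tags, lifting) someI_ex)+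
qed

lemma inj_on_conj_rep: "inj_on (conj_rep c) (conj_class \<sigma> \<delta> c)"
  by (rule inj_on_inverseI[of _ "conjugate c"]) (rule conj_rep(2))

lemma conjugate_image_conj_rep:
  assumes "S \<subseteq> conj_class \<sigma> \<delta> c"
  shows "conjugate c ` conj_rep c ` S = S"
proof -
  have "(\<lambda>s. conjugate c (conj_rep c s)) ` S = id ` S"
    using assms by (intro image_cong[OF refl]) (auto simp: conj_rep(2))
  then show ?thesis unfolding image_image by simp
qed

lemma conj_rep_image_subset_lift: "conj_rep c ` (S \<inter> conj_class \<sigma> \<delta> c) \<subseteq> lift c S"
  using conj_rep unfolding lift_def by auto

lemma lift_mono: "S \<subseteq> S' \<Longrightarrow> lift c S \<subseteq> lift c S'"
  unfolding lift_def by blast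

lemma inj_on_conjugate:
  assumes "right_indep (K c) E"
  shows "inj_on (conjugate c) E"
proof (rule inj_onI, rule ccontr)
  fix e e' assume e: "e \<in> E" "e' \<in> E" "conjugate c e = conjugate c e'" "e \<noteq> e'"
  have nz: "e \<noteq> 0" "e' \<noteq> 0" using zero_notin_right_indep[OF division_subring_Kcent assms] e by auto
  obtain t where t: "t \<in> K c" "e' = e * t" using conjugate_eq_imp_Kcent_multiple[OF nz e(3)] by blast
  have "e \<in> E - {e'}" using e by blast
  then have "e * t \<in> right_span (K c) (E - {e'})"
    by (rule right_span_mult[OF division_subring_Kcent right_span_base[OF division_subring_Kcent] t(1)])
  from this[folded t(2)] show False
    using right_indep_notin_right_span[OF division_subring_Kcent assms e(2)] by blast
qed

lemma lift_subset_right_span: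
  assumes "\<forall>x\<in>X. x \<noteq> 0" "S \<inter> conj_class \<sigma> \<delta> c \<subseteq> conjugate c ` X"
  shows "lift c S \<subseteq> right_span (K c) X"
proof
  fix y assume "y \<in> lift c S"
  then have y: "y \<noteq> 0" "conjugate c y \<in> S" unfolding lift_def by auto
  then have "conjugate c y \<in> S \<inter> conj_class \<sigma> \<delta> c" using conj_class_iff by blast
  then obtain x where x: "x \<in> X" "conjugate c y = conjugate c x" using assms(2) by blast
  then obtain t where "t \<in> K c" "y = x * t"
    using conjugate_eq_imp_Kcent_multiple[of x y c] assms(1) y(1) by metis
  then show "y \<in> right_span (K c) X"
    using right_span_mult[OF division_subring_Kcent right_span_base[OF division_subring_Kcent x(1)]] by simp
qed

lemma lift_subset_right_span_conj_rep:
  "lift c S \<subseteq> right_span (K c) (conj_rep c ` (S \<inter> conj_class \<sigma> \<delta> c))"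
  using conj_rep by (intro lift_subset_right_span) (auto simp: image_iff)

lemma right_span_lift_basis:
  assumes "finite S"
  shows "\<exists>\<beta>. finite \<beta> \<and> right_indep (K c) \<beta> \<and> right_span (K c) \<beta> = right_span (K c) (lift c S)"
proof -
  have span: "right_span (K c) (lift c S) \<subseteq> right_span (K c) (conj_rep c ` (S \<inter> conj_class \<sigma> \<delta> c))"
    using lift_subset_right_span_conj_rep by (rule right_span_subset_right_span[OF division_subring_Kcent])
  have fin: "finite (conj_rep c ` (S \<inter> conj_class \<sigma> \<delta> c))" using assms by simp
  from right_basis_extend[OF division_subring_Kcent right_subspace_right_span[OF division_subring_Kcent]
      fin span empty_subsetI right_indep_empty]
  show ?thesis by blast
qed

lemma conjugate_in_P_closure:
  assumes "u \<in> right_span (K c) (lift c S)" "u \<noteq> 0"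
  shows "conjugate c u \<in> P_closure \<sigma> \<delta> S"
  unfolding P_closure_def
proof (intro CollectI allI impI)
  fix F assume F: "spoly F \<and> (\<forall>b\<in>S. skew_eval \<sigma> \<delta> F b = 0)"
  then obtain N where N: "degree_less N F" using spoly_imp_degree_less by blast
  have "lift c S \<subseteq> {y. D_eval \<sigma> \<delta> F c y = 0}"
    using F skew_eval_conjugate_eq_0_iff[OF N] unfolding lift_def by auto
  then have "right_span (K c) (lift c S) \<subseteq> {y. D_eval \<sigma> \<delta> F c y = 0}"
    by (rule right_span_minimal[OF right_subspace_kernel[OF right_linear_D_eval[OF N]]])
  then show "skew_eval \<sigma> \<delta> F (conjugate c u) = 0"
    using assms skew_eval_conjugate_eq_0_iff[OF N] by auto
qed

lemma right_indep_of_P_independent: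
  assumes B: "P_independent \<sigma> \<delta> B" and X: "X \<subseteq> lift c B" "inj_on (conjugate c) X"
  shows "right_indep (K c) X"
proof (rule ccontr)
  assume "\<not> right_indep (K c) X"
  then obtain x where x: "x \<in> X" "x \<in> right_span (K c) (X - {x})"
    using not_right_indep_imp_in_right_span[OF division_subring_Kcent] by blast
  define s where "s = conjugate c x"
  have "X - {x} \<subseteq> lift c (B - {s})"
    using X x(1) unfolding lift_def s_def by (auto dest: inj_onD)
  then have "x \<in> right_span (K c) (lift c (B - {s}))" using x(2) right_span_mono by blast
  then have "s \<in> P_closure \<sigma> \<delta> (B - {s})"
    unfolding s_def using X x(1) by (intro conjugate_in_P_closure) (auto simp: lift_def)
  moreover have "s \<in> B" using X x(1) unfolding s_def lift_def by blast
  ultimately show False using B unfolding P_independent_def by blast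
qed

lemma right_indep_conj_rep:
  assumes "P_independent \<sigma> \<delta> B"
  shows "right_indep (K c) (conj_rep c ` (B \<inter> conj_class \<sigma> \<delta> c))"
proof (rule right_indep_of_P_independent[OF assms conj_rep_image_subset_lift])
  show "inj_on (conjugate c) (conj_rep c ` (B \<inter> conj_class \<sigma> \<delta> c))"
    by (rule inj_on_inverseI[of _ "conj_rep c"]) (use conj_rep in force)
qed

end

lemma subset_P_closure: "S \<subseteq> P_closure \<sigma> \<delta> S"
  unfolding P_closure_def by blast

locale nonconj_family = sigma_delta +
  fixes l :: nat and a :: "nat \<Rightarrow> 'a"
  assumes nonconj: "pairwise_nonconj l a"
begin

definition conj_union :: "(nat \<Rightarrow> 'a set) \<Rightarrow> 'a set" where
  "conj_union V = (\<Union>i<l. conjugate (a i) ` (V i - {0}))"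

lemma conj_class_index_unique:
  assumes "i < l" "j < l" "s \<in> conj_class \<sigma> \<delta> (a i)" "s \<in> conj_class \<sigma> \<delta> (a j)"
  shows "i = j"
  using conj_class_common[OF assms(3,4)] nonconj assms(1,2) unfolding pairwise_nonconj_def by blast

lemma conjugate_index_unique:
  assumes "i < l" "j < l" "u \<noteq> 0" "w \<noteq> 0" "conjugate (a i) u = conjugate (a j) w"
  shows "i = j"
proof (rule conj_class_index_unique[OF assms(1,2)])
  show "conjugate (a i) u \<in> conj_class \<sigma> \<delta> (a i)" using assms(3) conj_class_iff by blast
  show "conjugate (a i) u \<in> conj_class \<sigma> \<delta> (a j)" unfolding assms(5) using assms(4) conj_class_iff by blast
qed

lemma conj_union_subset: "conj_union V \<subseteq> (\<Union>i<l. conj_class \<sigma> \<delta> (a i))"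
  unfolding conj_union_def using conj_class_iff by blast

lemma conjugate_mem_conj_union_iff:
  assumes "i < l" "u \<noteq> 0" and V: "\<forall>j<l. right_subspace (K (a j)) (V j)"
  shows "conjugate (a i) u \<in> conj_union V \<longleftrightarrow> u \<in> V i"
proof
  assume "conjugate (a i) u \<in> conj_union V"
  then obtain j w where w: "j < l" "w \<in> V j" "w \<noteq> 0" "conjugate (a i) u = conjugate (a j) w"
    unfolding conj_union_def by blast
  then have "j = i" using conjugate_index_unique[OF assms(1) w(1) assms(2) w(3)] by simp
  then obtain t where "t \<in> K (a i)" "u = w * t"
    using conjugate_eq_imp_Kcent_multiple[OF w(3) assms(2)] w(4) by metis
  then show "u \<in> V i" using right_subspaceD(3) V w(2) \<open>j = i\<close> assms(1) by blast
qed (use assms in \<open>auto simp: conj_union_def\<close>)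

lemma lift_conj_union:
  assumes "i < l" "\<forall>j<l. right_subspace (K (a j)) (V j)"
  shows "lift (a i) (conj_union V) = V i - {0}"
  using conjugate_mem_conj_union_iff[OF assms(1) _ assms(2)] unfolding lift_def by auto

lemma conj_union_eq_imp_eq:
  assumes "conj_union V = conj_union V'" "i < l"
    "\<forall>j<l. right_subspace (K (a j)) (V j)" "\<forall>j<l. right_subspace (K (a j)) (V' j)"
  shows "V i = V' i"
proof -
  have "V i - {0} = V' i - {0}" using lift_conj_union assms by metis
  moreover have "0 \<in> V i" "0 \<in> V' i" using assms(2-4) right_subspaceD(1) by blast+
  ultimately show ?thesis by blast
qed

lemma annihilator_of_lift_spans:
  assumes "finite S"
  obtains f d \<beta> where "degree_less (Suc d) f" "f \<noteq> (\<lambda>_. 0)" "d \<le> (\<Sum>i<l. card (\<beta> i))"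
    "\<forall>i. finite (\<beta> i) \<and> right_indep (K (a i)) (\<beta> i) \<and> right_span (K (a i)) (\<beta> i) = right_span (K (a i)) (lift (a i) S)"
    "\<forall>i<l. \<forall>y\<in>right_span (K (a i)) (lift (a i) S). D_eval \<sigma> \<delta> f (a i) y = 0"
proof -
  have "\<forall>i. \<exists>\<beta>. finite \<beta> \<and> right_indep (K (a i)) \<beta> \<and> right_span (K (a i)) \<beta> = right_span (K (a i)) (lift (a i) S)"
    using right_span_lift_basis[OF assms] by blast
  from choice[OF this] obtain \<beta> where \<beta>: "\<forall>i. finite (\<beta> i) \<and> right_indep (K (a i)) (\<beta> i)
      \<and> right_span (K (a i)) (\<beta> i) = right_span (K (a i)) (lift (a i) S)"
    by blast
  then have "\<forall>i<l. finite (\<beta> i)" by blast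
  from exists_annihilator_of_right_spans[OF this, of a] obtain f d where f:
    "degree_less (Suc d) f" "f \<noteq> (\<lambda>_. 0)" "d \<le> (\<Sum>i<l. card (\<beta> i))"
    "\<forall>i<l. \<forall>y\<in>right_span (K (a i)) (\<beta> i). D_eval \<sigma> \<delta> f (a i) y = 0" by blast
  show ?thesis
  proof (rule that[OF f(1-3) \<beta>])
    show "\<forall>i<l. \<forall>y\<in>right_span (K (a i)) (lift (a i) S). D_eval \<sigma> \<delta> f (a i) y = 0" using f(4) \<beta> by simp
  qed
qed

text \<open>An annihilator \<open>f\<close> of the spans, of degree at most \<open>\<Sum>_i dim V_i\<close>, vanishes on \<open>S\<close> and
  hence at \<open>p\<close>. By the Lam--Leroy bound its roots over \<open>a_i\<close> lie in \<open>V_i\<close>; and \<open>p\<close> cannot lie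
  outside all the classes, since it would then be a root over an additional class.\<close>
lemma P_closure_subset_conj_union:
  assumes S: "finite S" "S \<subseteq> (\<Union>i<l. conj_class \<sigma> \<delta> (a i))"
  shows "P_closure \<sigma> \<delta> S \<subseteq> conj_union (\<lambda>i. right_span (K (a i)) (lift (a i) S))"
proof
  fix p assume p: "p \<in> P_closure \<sigma> \<delta> S"
  let ?V = "\<lambda>i. right_span (K (a i)) (lift (a i) S)"
  obtain f d \<beta> where f: "degree_less (Suc d) f" "f \<noteq> (\<lambda>_. 0)" "d \<le> (\<Sum>i<l. card (\<beta> i))"
    and \<beta>: "\<forall>i. finite (\<beta> i) \<and> right_indep (K (a i)) (\<beta> i) \<and> right_span (K (a i)) (\<beta> i) = ?V i"
    and f_V: "\<forall>i<l. \<forall>y\<in>?V i. D_eval \<sigma> \<delta> f (a i) y = 0"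
    by (rule annihilator_of_lift_spans[OF S(1)])
  have "\<forall>s\<in>S. skew_eval \<sigma> \<delta> f s = 0"
  proof
    fix s assume "s \<in> S"
    then obtain i x where "i < l" "x \<noteq> 0" "s = conjugate (a i) x"
      using S(2) conj_class_iff by blast
    moreover have "x \<in> ?V i"
      using \<open>s \<in> S\<close> calculation by (intro right_span_base[OF division_subring_Kcent]) (simp add: lift_def)
    ultimately show "skew_eval \<sigma> \<delta> f s = 0" using f_V skew_eval_conjugate_eq_0_iff[OF f(1)] by blast
  qed
  then have fp: "skew_eval \<sigma> \<delta> f p = 0" using p degree_less_imp_spoly[OF f(1)] unfolding P_closure_def by blast
  have roots: "\<forall>j<l. finite (\<beta> j) \<and> right_indep (K (a j)) (\<beta> j) \<and> (\<forall>b\<in>\<beta> j. D_eval \<sigma> \<delta> f (a j) b = 0)"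
    using \<beta> f_V right_span_base[OF division_subring_Kcent] by blast
  show "p \<in> conj_union ?V"
  proof (cases "\<exists>i<l. p \<in> conj_class \<sigma> \<delta> (a i)")
    case True
    then obtain i w where i: "i < l" "w \<noteq> 0" "p = conjugate (a i) w" using conj_class_iff by blast
    then have "D_eval \<sigma> \<delta> f (a i) w = 0" using fp skew_eval_conjugate_eq_0_iff[OF f(1)] by blast
    then have "w \<in> ?V i" using roots_in_right_span[OF nonconj f(1,2) roots f(3) i(1)] \<beta> by simp
    then show ?thesis unfolding conj_union_def using i by blast
  next
    case False
    let ?c = "a(l := p)" and ?\<beta> = "\<beta>(l := {})"
    have "D_eval \<sigma> \<delta> f (?c l) 1 = 0" using fp skew_eval_eq_D_eval[OF f(1)] by simp
    moreover have "\<forall>j<Suc l. finite (?\<beta> j) \<and> right_indep (K (?c j)) (?\<beta> j)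
        \<and> (\<forall>b\<in>?\<beta> j. D_eval \<sigma> \<delta> f (?c j) b = 0)"
      using roots by (simp add: less_Suc_eq right_indep_empty)
    moreover have "d \<le> (\<Sum>j<Suc l. card (?\<beta> j))" using f(3) by simp
    ultimately have "(1::'a) \<in> right_span (K (?c l)) (?\<beta> l)"
      using roots_in_right_span[OF pairwise_nonconj_extend[OF nonconj] f(1,2)] False by blast
    then show ?thesis by (simp add: right_span_empty)
  qed
qed

lemma conj_union_cong: "(\<And>i. i < l \<Longrightarrow> V i = V' i) \<Longrightarrow> conj_union V = conj_union V'"
  unfolding conj_union_def by simp

lemma P_closure_eq_conj_union:
  assumes "finite S" "S \<subseteq> (\<Union>i<l. conj_class \<sigma> \<delta> (a i))"
  shows "P_closure \<sigma> \<delta> S = conj_union (\<lambda>i. right_span (K (a i)) (lift (a i) S))"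
proof
  show "conj_union (\<lambda>i. right_span (K (a i)) (lift (a i) S)) \<subseteq> P_closure \<sigma> \<delta> S"
    unfolding conj_union_def using conjugate_in_P_closure by blast
qed (rule P_closure_subset_conj_union[OF assms])

lemma P_closure_eq_conj_union_right_span:
  assumes B: "finite B" "B \<subseteq> (\<Union>i<l. conj_class \<sigma> \<delta> (a i))"
    and X: "\<And>i. i < l \<Longrightarrow> B \<inter> conj_class \<sigma> \<delta> (a i) = conjugate (a i) ` X i" "\<And>i. i < l \<Longrightarrow> 0 \<notin> X i"
  shows "P_closure \<sigma> \<delta> B = conj_union (\<lambda>i. right_span (K (a i)) (X i))"
proof -
  have "right_span (K (a i)) (lift (a i) B) = right_span (K (a i)) (X i)" if i: "i < l" for i
  proof
    have "lift (a i) B \<subseteq> right_span (K (a i)) (X i)"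
      using X[OF i] by (intro lift_subset_right_span) auto
    then show "right_span (K (a i)) (lift (a i) B) \<subseteq> right_span (K (a i)) (X i)"
      by (rule right_span_subset_right_span[OF division_subring_Kcent])
    have "X i \<subseteq> lift (a i) B" using X[OF i] unfolding lift_def by blast
    then show "right_span (K (a i)) (X i) \<subseteq> right_span (K (a i)) (lift (a i) B)"
      by (rule right_span_mono)
  qed
  then have "conj_union (\<lambda>i. right_span (K (a i)) (lift (a i) B))
      = conj_union (\<lambda>i. right_span (K (a i)) (X i))"
    by (rule conj_union_cong)
  then show ?thesis using P_closure_eq_conj_union[OF B] by simp
qed

text \<open>Removing \<open>b = conjugate a_i e\<close> from \<open>B\<close> removes exactly \<open>e\<close> from \<open>X_i\<close>, so \<open>b\<close> would
  stay in the P-closure only if \<open>e\<close> were in the span of \<open>X_i - {e}\<close>.\<close>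
lemma P_independent_of_right_indep:
  assumes B: "finite B" "B \<subseteq> (\<Union>i<l. conj_class \<sigma> \<delta> (a i))"
    and X: "\<And>i. i < l \<Longrightarrow> B \<inter> conj_class \<sigma> \<delta> (a i) = conjugate (a i) ` X i"
      "\<And>i. i < l \<Longrightarrow> right_indep (K (a i)) (X i)"
  shows "P_independent \<sigma> \<delta> B"
  unfolding P_independent_def
proof (intro ballI notI)
  fix b assume "b \<in> B" and b_cl: "b \<in> P_closure \<sigma> \<delta> (B - {b})"
  then obtain i where i: "i < l" "b \<in> conj_class \<sigma> \<delta> (a i)" using B(2) by blast
  then obtain e where e: "e \<in> X i" "b = conjugate (a i) e" using X(1) \<open>b \<in> B\<close> by blast
  have X_nz: "0 \<notin> X j" if "j < l" for j
    using zero_notin_right_indep[OF division_subring_Kcent X(2)[OF that]] .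
  define X' where "X' = X(i := X i - {e})"
  have "(B - {b}) \<inter> conj_class \<sigma> \<delta> (a j) = conjugate (a j) ` X' j" if j: "j < l" for j
  proof (cases "j = i")
    case True
    then show ?thesis
      using X(1)[OF i(1)] inj_on_image_set_diff[OF inj_on_conjugate[OF X(2)[OF i(1)]], of "X i" "{e}"] e unfolding X'_def by auto
  next
    case False
    then have "b \<notin> conj_class \<sigma> \<delta> (a j)" using conj_class_index_unique[OF i(1) j] i(2) by blast
    then show ?thesis using X(1)[OF j] False unfolding X'_def by auto
  qed
  then have "P_closure \<sigma> \<delta> (B - {b}) = conj_union (\<lambda>j. right_span (K (a j)) (X' j))"
    using X_nz B by (intro P_closure_eq_conj_union_right_span) (auto simp: X'_def)
  moreover have "\<forall>j<l. right_subspace (K (a j)) (right_span (K (a j)) (X' j))"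
    using right_subspace_right_span[OF division_subring_Kcent] by blast
  moreover have "e \<noteq> 0" using X_nz[OF i(1)] e(1) by blast
  ultimately have "e \<in> right_span (K (a i)) (X' i)"
    using b_cl e(2) conjugate_mem_conj_union_iff[OF i(1)] by simp
  then have "e \<in> right_span (K (a i)) (X i - {e})" by (simp add: X'_def)
  then show False using right_indep_notin_right_span[OF division_subring_Kcent X(2)[OF i(1)] e(1)] by blast
qed

lemma P_basis_conj_union:
  assumes E: "\<And>i. i < l \<Longrightarrow> finite (E i)" "\<And>i. i < l \<Longrightarrow> right_indep (K (a i)) (E i)"
  shows "P_basis \<sigma> \<delta> (\<Union>i<l. conjugate (a i) ` E i) (conj_union (\<lambda>i. right_span (K (a i)) (E i)))"
proof -
  define B where "B = (\<Union>i<l. conjugate (a i) ` E i)"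
  have E_nz: "0 \<notin> E i" if "i < l" for i
    using zero_notin_right_indep[OF division_subring_Kcent E(2)[OF that]] .
  have classes: "conjugate (a i) ` E i \<subseteq> conj_class \<sigma> \<delta> (a i)" if "i < l" for i
  proof (rule image_subsetI)
    fix e assume "e \<in> E i"
    then show "conjugate (a i) e \<in> conj_class \<sigma> \<delta> (a i)"
      using E_nz[OF that] unfolding conj_class_def by blast
  qed
  have B: "finite B" "B \<subseteq> (\<Union>i<l. conj_class \<sigma> \<delta> (a i))"
    unfolding B_def using E(1) classes by (simp, intro UN_mono) auto
  have B_class: "B \<inter> conj_class \<sigma> \<delta> (a i) = conjugate (a i) ` E i" if i: "i < l" for i
  proof
    show "B \<inter> conj_class \<sigma> \<delta> (a i) \<subseteq> conjugate (a i) ` E i"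
    proof
      fix s assume s: "s \<in> B \<inter> conj_class \<sigma> \<delta> (a i)"
      then obtain j where j: "j < l" "s \<in> conjugate (a j) ` E j" unfolding B_def by blast
      then have "j = i" using conj_class_index_unique[OF j(1) i] classes[OF j(1)] s by blast
      then show "s \<in> conjugate (a i) ` E i" using j(2) by simp
    qed
    have "conjugate (a i) ` E i \<subseteq> B" unfolding B_def using i by blast
    then show "conjugate (a i) ` E i \<subseteq> B \<inter> conj_class \<sigma> \<delta> (a i)" using classes[OF i] by simp
  qed
  have "P_closure \<sigma> \<delta> B = conj_union (\<lambda>i. right_span (K (a i)) (E i))"
    using B B_class E_nz by (rule P_closure_eq_conj_union_right_span)
  moreover have "P_independent \<sigma> \<delta> B"
    using B B_class E(2) by (rule P_independent_of_right_indep)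
  ultimately show ?thesis
    using subset_P_closure[of B \<sigma> \<delta>] unfolding P_basis_def B_def[symmetric] by simp
qed

section \<open>Ranks and the skew weight\<close>

lemma card_P_basis_conj_union:
  assumes E: "\<And>i. i < l \<Longrightarrow> finite (E i)" "\<And>i. i < l \<Longrightarrow> right_indep (K (a i)) (E i)"
    and B: "P_basis \<sigma> \<delta> B (conj_union (\<lambda>i. right_span (K (a i)) (E i)))"
  shows "card B = (\<Sum>i<l. card (E i))"
proof -
  define V where "V i = right_span (K (a i)) (E i)" for i
  have V: "\<forall>j<l. right_subspace (K (a j)) (V j)"
    unfolding V_def using right_subspace_right_span[OF division_subring_Kcent] by blast
  have BV: "B \<subseteq> conj_union V" and B_indep: "P_independent \<sigma> \<delta> B" and B_cl: "P_closure \<sigma> \<delta> B = conj_union V"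
    using B unfolding P_basis_def V_def by auto
  have B_classes: "B \<subseteq> (\<Union>i<l. conj_class \<sigma> \<delta> (a i))" using BV conj_union_subset by blast
  define \<beta> where "\<beta> i = conj_rep (a i) ` (B \<inter> conj_class \<sigma> \<delta> (a i))" for i
  have B_class: "B \<inter> conj_class \<sigma> \<delta> (a i) = conjugate (a i) ` \<beta> i" for i
    unfolding \<beta>_def by (simp add: conjugate_image_conj_rep)
  have \<beta>_indep: "right_indep (K (a i)) (\<beta> i)" for i
    unfolding \<beta>_def by (rule right_indep_conj_rep[OF B_indep])
  have \<beta>_V: "\<beta> i \<subseteq> V i" if "i < l" for i
    using conj_rep_image_subset_lift lift_mono[OF BV] lift_conj_union[OF that V] unfolding \<beta>_def by blast
  have \<beta>_fin: "finite (\<beta> i)" if "i < l" for i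
    using right_indep_card_le[OF division_subring_Kcent _ \<beta>_indep] \<beta>_V[OF that] E that unfolding V_def by blast
  have B_Un: "B = (\<Union>i<l. B \<inter> conj_class \<sigma> \<delta> (a i))" using B_classes by blast
  have B_fin: "finite B"
    by (subst B_Un) (simp add: B_class \<beta>_fin)
  have "P_closure \<sigma> \<delta> B = conj_union (\<lambda>i. right_span (K (a i)) (\<beta> i))"
    using B_fin B_classes B_class zero_notin_right_indep[OF division_subring_Kcent \<beta>_indep]
    by (rule P_closure_eq_conj_union_right_span)
  then have \<beta>_span: "right_span (K (a i)) (\<beta> i) = V i" if "i < l" for i
    using conj_union_eq_imp_eq[OF _ that _ V] B_cl right_subspace_right_span[OF division_subring_Kcent] by simp
  have "card (B \<inter> conj_class \<sigma> \<delta> (a i)) = card (E i)" if "i < l" for i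
    using right_dim_right_span[OF division_subring_Kcent \<beta>_fin[OF that] \<beta>_indep]
      right_dim_right_span[OF division_subring_Kcent E[OF that]] \<beta>_span[OF that]
      card_image[OF inj_on_subset[OF inj_on_conj_rep Int_lower2]]
    unfolding V_def \<beta>_def by simp
  moreover have "card B = (\<Sum>i<l. card (B \<inter> conj_class \<sigma> \<delta> (a i)))"
    by (subst B_Un, rule card_UN_disjoint) (use B_fin conj_class_index_unique in auto)
  ultimately show ?thesis by simp
qed

lemma Rk_conj_union:
  assumes "\<And>i. i < l \<Longrightarrow> finite (E i)" "\<And>i. i < l \<Longrightarrow> right_indep (K (a i)) (E i)"
  shows "Rk \<sigma> \<delta> (conj_union (\<lambda>i. right_span (K (a i)) (E i))) = (\<Sum>i<l. card (E i))"
proof -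
  have "\<exists>B. P_basis \<sigma> \<delta> B (conj_union (\<lambda>i. right_span (K (a i)) (E i)))"
    using P_basis_conj_union[OF assms] by blast
  then have "P_basis \<sigma> \<delta> (SOME B. P_basis \<sigma> \<delta> B (conj_union (\<lambda>i. right_span (K (a i)) (E i))))
      (conj_union (\<lambda>i. right_span (K (a i)) (E i)))"
    by (rule someI_ex)
  from card_P_basis_conj_union[OF assms this] show ?thesis unfolding Rk_def .
qed

lemma Rk_conj_union_right_dim:
  assumes V: "\<And>i. i < l \<Longrightarrow> right_subspace (K (a i)) (V i)"
    and X: "\<And>i. i < l \<Longrightarrow> finite (X i)" "\<And>i. i < l \<Longrightarrow> V i \<subseteq> right_span (K (a i)) (X i)"
  shows "Rk \<sigma> \<delta> (conj_union V) = (\<Sum>i<l. right_dim (K (a i)) (V i))"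
proof -
  have "\<exists>E. finite E \<and> right_indep (K (a i)) E \<and> right_span (K (a i)) E = V i" if "i < l" for i
    using right_basis_extend[OF division_subring_Kcent V[OF that] X[OF that] empty_subsetI right_indep_empty]
    by blast
  then obtain E where E: "\<And>i. i < l \<Longrightarrow> finite (E i) \<and> right_indep (K (a i)) (E i) \<and> right_span (K (a i)) (E i) = V i"
    by metis
  then have "conj_union V = conj_union (\<lambda>i. right_span (K (a i)) (E i))"
    by (intro conj_union_cong) simp
  moreover have "right_dim (K (a i)) (V i) = card (E i)" if "i < l" for i
    using E[OF that] right_dim_right_span[OF division_subring_Kcent] by metis
  ultimately show ?thesis using Rk_conj_union E by simp
qed

lemma skew_zeros_Int_conj_union:
  assumes F: "degree_less N F" and V: "\<forall>j<l. right_subspace (K (a j)) (V j)"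
  shows "skew_zeros \<sigma> \<delta> F \<inter> conj_union V = conj_union (\<lambda>i. V i \<inter> {y. D_eval \<sigma> \<delta> F (a i) y = 0})"
  unfolding skew_zeros_def conj_union_def using skew_eval_conjugate_eq_0_iff[OF F] by auto

lemma skew_wt_conj_union:
  assumes F: "degree_less N F"
    and X: "\<And>i. i < l \<Longrightarrow> finite (X i)" "\<And>i. i < l \<Longrightarrow> right_indep (K (a i)) (X i)"
  shows "skew_wt \<sigma> \<delta> (conj_union (\<lambda>i. right_span (K (a i)) (X i))) (\<Sum>i<l. card (X i)) F
    = (\<Sum>i<l. right_dim (K (a i)) (right_span (K (a i)) (D_eval \<sigma> \<delta> F (a i) ` X i)))"
proof -
  let ?W = "\<lambda>i. right_span (K (a i)) (X i) \<inter> {y. D_eval \<sigma> \<delta> F (a i) y = 0}"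
  let ?I = "\<lambda>i. right_span (K (a i)) (D_eval \<sigma> \<delta> F (a i) ` X i)"
  have W: "right_subspace (K (a i)) (?W i)" for i
    using right_subspace_Int[OF right_subspace_right_span right_subspace_kernel[OF right_linear_D_eval[OF F]]]
      division_subring_Kcent by blast
  have "skew_zeros \<sigma> \<delta> F \<inter> conj_union (\<lambda>i. right_span (K (a i)) (X i)) = conj_union ?W"
    using right_subspace_right_span[OF division_subring_Kcent] by (intro skew_zeros_Int_conj_union[OF F]) blast
  moreover have "Rk \<sigma> \<delta> (conj_union ?W) = (\<Sum>i<l. right_dim (K (a i)) (?W i))"
    using W X(1) by (intro Rk_conj_union_right_dim[where X = X]) auto
  moreover have "(\<Sum>i<l. card (X i)) = (\<Sum>i<l. right_dim (K (a i)) (?W i)) + (\<Sum>i<l. right_dim (K (a i)) (?I i))"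
    unfolding sum.distrib[symmetric] using X
    by (intro sum.cong refl rank_nullity_right_dim[OF division_subring_Kcent right_linear_D_eval[OF F]]) auto
  ultimately show ?thesis unfolding skew_wt_def by simp
qed

lemma P_basis_enumeration:
  assumes B: "P_basis \<sigma> \<delta> B \<Omega>" "finite B" "B \<subseteq> (\<Union>i<l. conj_class \<sigma> \<delta> (a i))"
    and enum: "\<forall>i<l. bij_betw (pts i) {..<nn i} (B \<inter> conj_class \<sigma> \<delta> (a i))"
    and nz: "\<forall>i<l. \<forall>j<nn i. \<alpha> i j \<noteq> 0"
    and pts: "\<forall>i<l. \<forall>j<nn i. pts i j = conjugate (a i) (\<alpha> i j)"
  shows "\<Omega> = conj_union (\<lambda>i. right_span (K (a i)) (\<alpha> i ` {..<nn i}))"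
    and "\<And>i. i < l \<Longrightarrow> right_indep (K (a i)) (\<alpha> i ` {..<nn i})"
    and "\<And>i. i < l \<Longrightarrow> card (\<alpha> i ` {..<nn i}) = nn i"
proof -
  define X where "X i = \<alpha> i ` {..<nn i}" for i
  have X: "B \<inter> conj_class \<sigma> \<delta> (a i) = conjugate (a i) ` X i" "inj_on (\<alpha> i) {..<nn i}"
    "inj_on (conjugate (a i)) (X i)" "0 \<notin> X i" if i: "i < l" for i
  proof -
    have "bij_betw (pts i) {..<nn i} (B \<inter> conj_class \<sigma> \<delta> (a i))
        = bij_betw (conjugate (a i) \<circ> \<alpha> i) {..<nn i} (B \<inter> conj_class \<sigma> \<delta> (a i))"
      by (rule bij_betw_cong) (use pts i in simp)
    then have "bij_betw (conjugate (a i) \<circ> \<alpha> i) {..<nn i} (B \<inter> conj_class \<sigma> \<delta> (a i))"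
      using enum i by blast
    then have "(conjugate (a i) \<circ> \<alpha> i) ` {..<nn i} = B \<inter> conj_class \<sigma> \<delta> (a i)"
      "inj_on (conjugate (a i) \<circ> \<alpha> i) {..<nn i}" unfolding bij_betw_def by blast+
    then show "B \<inter> conj_class \<sigma> \<delta> (a i) = conjugate (a i) ` X i" "inj_on (\<alpha> i) {..<nn i}"
      "inj_on (conjugate (a i)) (X i)"
      unfolding X_def by (auto simp: image_comp dest: inj_on_imageI2 inj_on_imageI)
    show "0 \<notin> X i" using nz i unfolding X_def by auto
  qed
  show "\<Omega> = conj_union (\<lambda>i. right_span (K (a i)) (\<alpha> i ` {..<nn i}))"
    using P_closure_eq_conj_union_right_span[OF B(2,3), of X] X(1,4) B(1)
    unfolding P_basis_def X_def by simp
  fix i assume i: "i < l"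
  have "X i \<subseteq> lift (a i) B" using X(1,4)[OF i] unfolding lift_def by blast
  then show "right_indep (K (a i)) (\<alpha> i ` {..<nn i})"
    using right_indep_of_P_independent X(3)[OF i] B(1) unfolding P_basis_def X_def by blast
  show "card (\<alpha> i ` {..<nn i}) = nn i" using card_image[OF X(2)[OF i]] by simp
qed

end

theorem mainTheorem10:
  fixes \<sigma> \<delta> :: "'a::division_ring \<Rightarrow> 'a"
    and \<Omega> \<A> :: "'a set"
    and l :: nat and a :: "nat \<Rightarrow> 'a" and nn :: "nat \<Rightarrow> nat"
    and pts \<alpha> :: "nat \<Rightarrow> nat \<Rightarrow> 'a" and n :: nat
    and F :: "nat \<Rightarrow> 'a"
  assumes sigma: "ring_endo \<sigma>"
    and delta: "sigma_derivation \<sigma> \<delta>"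
    and closed: "P_closed \<sigma> \<delta> \<Omega>"
    and basis: "P_basis \<sigma> \<delta> \<A> \<Omega>"
    and finA: "finite \<A>"
    and nonconj: "\<forall>i<l. \<forall>j<l. i \<noteq> j \<longrightarrow> a j \<notin> conj_class \<sigma> \<delta> (a i)"
    and cover: "\<A> = (\<Union>i<l. \<A> \<inter> conj_class \<sigma> \<delta> (a i))"
    and nonempty: "\<forall>i<l. nn i \<ge> 1"
    and enum: "\<forall>i<l. bij_betw (pts i) {..<nn i} (\<A> \<inter> conj_class \<sigma> \<delta> (a i))"
    and alpha_nz: "\<forall>i<l. \<forall>j<nn i. \<alpha> i j \<noteq> 0"
    and pts_def: "\<forall>i<l. \<forall>j<nn i. pts i j = Dop \<sigma> \<delta> (a i) (\<alpha> i j) * inverse (\<alpha> i j)"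
    and n_def: "n = (\<Sum>i<l. nn i)"
    and degF: "\<forall>k\<ge>n. F k = 0"
  shows "wt_SR l nn (\<lambda>i. Kcent \<sigma> \<delta> (a i)) (\<lambda>i j. D_eval \<sigma> \<delta> F (a i) (\<alpha> i j))
           = skew_wt \<sigma> \<delta> \<Omega> n F"
proof -
  interpret nonconj_family \<sigma> \<delta> l a
    using sigma delta nonconj
    by (simp add: nonconj_family_def nonconj_family_axioms_def sigma_delta_def sigma_delta.pairwise_nonconj_def)
  let ?X = "\<lambda>i. \<alpha> i ` {..<nn i}"
  have "\<A> \<subseteq> (\<Union>i<l. conj_class \<sigma> \<delta> (a i))" using cover by blast
  note X = P_basis_enumeration[OF basis finA this enum alpha_nz pts_def]
  have "degree_less n F" using degF unfolding degree_less_def by blast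
  then have "skew_wt \<sigma> \<delta> (conj_union (\<lambda>i. right_span (K (a i)) (?X i))) (\<Sum>i<l. card (?X i)) F
      = (\<Sum>i<l. right_dim (K (a i)) (right_span (K (a i)) (D_eval \<sigma> \<delta> F (a i) ` ?X i)))"
    by (rule skew_wt_conj_union) (simp_all add: X)
  moreover have "{D_eval \<sigma> \<delta> F (a i) (\<alpha> i j) | j. j < nn i} = D_eval \<sigma> \<delta> F (a i) ` ?X i" for i
    by auto
  ultimately show ?thesis unfolding wt_SR_def n_def using X by simp
qed

end
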